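(* For every $n\in\mathbb{Z}_{>0}$, $\#\mathrm{E}_n=\sum_{d\mid n}\sigma_1(d)\,\#\mathrm{E}^{\mathrm{p}}_{n/d}$.
   Context: A square-tiled surface with $n$ squares is a connected surface obtained from $n$ unit squares by identifying, via translations, each top side with some bottom side and each right side with some left side (a connected degree-$n$ cover of $\mathbb{C}/(\mathbb{Z}+i\mathbb{Z})$ branched over one point), counted up to translation isomorphism. $\mathcal{H}(2)$: genus $2$ surfaces with a single cone point, of angle $6\pi$. $\mathrm{E}_n$ is the set of square-tiled surfaces with $n$ squares in $\mathcal{H}(2)$; $\mathrm{E}_n^{\mathrm{p}}$ its subset of primitive surfaces, i.e. those whose lattice of periods (subgroup of $\mathbb{Z}^2$ generated by holonomy vectors of saddle connections) is $\mathbb{Z}^2$. $\sigma_1(d)=\sum_{e\mid d}e$. *)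

theory Defs
  imports Main "HOL-Combinatorics.Permutations"
begin

text \<open>A square-tiled surface with n squares is encoded by a pair (h, v) of permutations
of the squares {0..<n}: h i is the square glued to the right side of square i,
v i is the square glued to the top side of square i.\<close>

definition sts_step :: "nat \<Rightarrow> (nat \<Rightarrow> nat) \<Rightarrow> (nat \<Rightarrow> nat) \<Rightarrow> (nat \<times> nat) set" where
  "sts_step n h v = {(i, j). i < n \<and> (j = h i \<or> j = v i \<or> h j = i \<or> v j = i)}"

definition sts :: "nat \<Rightarrow> ((nat \<Rightarrow> nat) \<times> (nat \<Rightarrow> nat)) set" where
  "sts n = {(h, v). h permutes {..<n} \<and> v permutes {..<n} \<and>
             (\<forall>i<n. \<forall>j<n. (i, j) \<in> (sts_step n h v)\<^sup>*)}"

text \<open>Commutator; its cycles on {0..<n} correspond to the vertices of the surface,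
a cycle of length k giving a cone angle 2 pi k.\<close>
definition commutator :: "(nat \<Rightarrow> nat) \<Rightarrow> (nat \<Rightarrow> nat) \<Rightarrow> nat \<Rightarrow> nat" where
  "commutator h v = inv v \<circ> inv h \<circ> v \<circ> h"

text \<open>Stratum H(2): exactly one vertex has angle 6 pi, all others 2 pi, i.e. the
commutator is a single 3-cycle on {0..<n}.\<close>
definition sts_H2 :: "nat \<Rightarrow> ((nat \<Rightarrow> nat) \<times> (nat \<Rightarrow> nat)) set" where
  "sts_H2 n = {(h, v) \<in> sts n. card {i. i < n \<and> commutator h v i \<noteq> i} = 3}"

text \<open>Translation isomorphism = relabelling of squares.\<close>
definition sts_iso :: "nat \<Rightarrow> (((nat \<Rightarrow> nat) \<times> (nat \<Rightarrow> nat)) \<times> ((nat \<Rightarrow> nat) \<times> (nat \<Rightarrow> nat))) set" where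
  "sts_iso n = {((h, v), (h', v')). \<exists>\<sigma>. \<sigma> permutes {..<n} \<and> h' \<circ> \<sigma> = \<sigma> \<circ> h \<and> v' \<circ> \<sigma> = \<sigma> \<circ> v}"

inductive walk :: "nat \<Rightarrow> (nat \<Rightarrow> nat) \<Rightarrow> (nat \<Rightarrow> nat) \<Rightarrow> nat \<Rightarrow> nat \<Rightarrow> int \<Rightarrow> int \<Rightarrow> bool"
  for n h v where
  refl: "i < n \<Longrightarrow> walk n h v i i 0 0"
| right: "walk n h v i j a b \<Longrightarrow> walk n h v i (h j) (a + 1) b"
| up: "walk n h v i j a b \<Longrightarrow> walk n h v i (v j) a (b + 1)"
| left: "walk n h v i j a b \<Longrightarrow> h k = j \<Longrightarrow> k < n \<Longrightarrow> walk n h v i k (a - 1) b"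
| down: "walk n h v i j a b \<Longrightarrow> v k = j \<Longrightarrow> k < n \<Longrightarrow> walk n h v i k a (b - 1)"

inductive_set gen_subgroup :: "(int \<times> int) set \<Rightarrow> (int \<times> int) set" for S where
  zero: "(0, 0) \<in> gen_subgroup S"
| gen: "s \<in> S \<Longrightarrow> s \<in> gen_subgroup S"
| diff: "(a, b) \<in> gen_subgroup S \<Longrightarrow> (c, d) \<in> gen_subgroup S \<Longrightarrow> (a - c, b - d) \<in> gen_subgroup S"

text \<open>Lattice of periods: holonomies of closed curves (for H(2), with a single cone
point, this is the lattice generated by holonomies of saddle connections).\<close>
definition period_lattice :: "nat \<Rightarrow> (nat \<Rightarrow> nat) \<Rightarrow> (nat \<Rightarrow> nat) \<Rightarrow> (int \<times> int) set" where
  "period_lattice n h v = gen_subgroup {(a, b). \<exists>i<n. walk n h v i i a b}"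

definition primitive :: "nat \<Rightarrow> (nat \<Rightarrow> nat) \<times> (nat \<Rightarrow> nat) \<Rightarrow> bool" where
  "primitive n p = (period_lattice n (fst p) (snd p) = UNIV)"

definition E :: "nat \<Rightarrow> ((nat \<Rightarrow> nat) \<times> (nat \<Rightarrow> nat)) set set" where
  "E n = sts_H2 n // sts_iso n"

definition Ep :: "nat \<Rightarrow> ((nat \<Rightarrow> nat) \<times> (nat \<Rightarrow> nat)) set set" where
  "Ep n = {C \<in> E n. \<forall>p\<in>C. primitive n p}"

definition sigma1 :: "nat \<Rightarrow> nat" where
  "sigma1 d = (\<Sum>e\<in>{e. e dvd d}. e)"

end

(* The period lattice of a surface in H(2) with n squares contains (k, 0) and (0, k') for some
   k, k' > 0, so it has a unique basis (a, 0), (b, c) in Hermite normal form, 0 <= b < a and 0 < c.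
   Reducing holonomies of paths from the cone point modulo the lattice gives every square a position
   in the a-by-c box. As the cone point is the only singularity, the two gluing permutations commute
   at every square except at the position of the cone point; hence the surface falls into blocks of
   a c squares, one for each square at position (0, 0), and moving between blocks by (a, 0) and by
   (b, c) defines a primitive surface in H(2) with n / (a c) squares whose blowup is the original
   surface. Conversely, blowing up a primitive surface in H(2) gives a surface in H(2) with lattice
   spanned by (a, 0) and (b, c), and two blowups are isomorphic exactly when the primitive surfaces
   are. So the classes in E n with this lattice correspond to the classes in Ep (n / (a c)), and
   for fixed d = a c there are sigma1 d triples (a, b, c). *)

theory Submission
  imports Defs "HOL-Combinatorics.Cycles"
begin

lemma permutes_lessThan_less: "h permutes {..<n} \<Longrightarrow> i < n \<Longrightarrow> h i < n"
  using permutes_in_image by fastforce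

lemma permutes_lessThanI:
  fixes n :: nat
  assumes "\<And>x. x < n \<Longrightarrow> f x < n" and "inj_on f {..<n}" and "\<And>x. \<not> x < n \<Longrightarrow> f x = x"
  shows "f permutes {..<n}"
proof (rule bij_imp_permutes)
  have "f ` {..<n} = {..<n}" using assms by (intro endo_inj_surj) auto
  then show "bij_betw f {..<n} {..<n}" using assms(2) by (simp add: bij_betw_def)
qed (use assms(3) in simp)

lemma abs_mult_less_imp_zero:
  fixes y :: int
  assumes "\<bar>int k * y\<bar> < int k"
  shows "y = 0"
proof (rule ccontr)
  assume "y \<noteq> 0"
  then have "1 \<le> \<bar>y\<bar>" by (simp add: abs_if)
  then have "int k \<le> int k * \<bar>y\<bar>" by (simp add: mult_le_cancel_left1)
  with assms show False by (simp add: abs_mult)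
qed

lemma fixpoint_free_card_3_orbit:
  assumes "inj f" and "finite M" and "card M = 3"
    and maps: "\<And>x. x \<in> M \<Longrightarrow> f x \<in> M \<and> f x \<noteq> x"
    and "x \<in> M" and "y \<in> M"
  shows "y = x \<or> y = f x \<or> y = f (f x)"
proof (rule ccontr)
  assume y: "\<not> (y = x \<or> y = f x \<or> y = f (f x))"
  have fx: "f x \<in> M" "f x \<noteq> x" "f (f x) \<in> M" "f (f x) \<noteq> f x" "f y \<in> M" "f y \<noteq> y"
    using maps \<open>x \<in> M\<close> \<open>y \<in> M\<close> by blast+
  have card_le_3: "card S \<le> 3" if "S \<subseteq> M" for S
    using card_mono[OF \<open>finite M\<close> that] \<open>card M = 3\<close> by simp
  show False
  proof (cases "f (f x) = x")
    case True
    then have "f y \<noteq> x" "f y \<noteq> f x" using y \<open>inj f\<close> by (metis injD)+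
    then have "card {x, f x, y, f y} = 4" using fx y by auto
    then show False using card_le_3[of "{x, f x, y, f y}"] fx \<open>x \<in> M\<close> \<open>y \<in> M\<close> by simp
  next
    case False
    then have "card {x, f x, f (f x), y} = 4" using fx y by auto
    then show False using card_le_3[of "{x, f x, f (f x), y}"] fx \<open>x \<in> M\<close> \<open>y \<in> M\<close> by simp
  qed
qed

lemma equiv_restrict: "equiv A R \<Longrightarrow> B \<subseteq> A \<Longrightarrow> equiv B (R \<inter> B \<times> B)"
  unfolding equiv_def refl_on_def sym_def trans_def by blast

lemma quotient_restrict_invariant:
  assumes "equiv A R" and invariant: "\<And>x y. (x, y) \<in> R \<Longrightarrow> P x \<longleftrightarrow> P y"
  shows "{C \<in> A // R. \<forall>p\<in>C. P p} = {x \<in> A. P x} // (R \<inter> {x \<in> A. P x} \<times> {x \<in> A. P x})"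
    (is "_ = ?A // ?R")
proof -
  have "R \<subseteq> A \<times> A" using \<open>equiv A R\<close> by (simp add: equiv_def)
  then have same_class: "?R `` {x} = R `` {x}" if "x \<in> ?A" for x
    using that invariant by auto
  show ?thesis
  proof
    show "{C \<in> A // R. \<forall>p\<in>C. P p} \<subseteq> ?A // ?R"
    proof clarify
      fix C assume "C \<in> A // R" "\<forall>p\<in>C. P p"
      then obtain x where "x \<in> A" "C = R `` {x}" "P x"
        using equiv_class_self[OF \<open>equiv A R\<close>] by (metis quotientE)
      then show "C \<in> ?A // ?R" using same_class by (metis (mono_tags) mem_Collect_eq quotientI)
    qed
    show "?A // ?R \<subseteq> {C \<in> A // R. \<forall>p\<in>C. P p}"
    proof (rule subsetI, elim quotientE)
      fix C x assume "C = ?R `` {x}" "x \<in> ?A"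
      then show "C \<in> {C \<in> A // R. \<forall>p\<in>C. P p}" using same_class by (auto intro: quotientI)
    qed
  qed
qed

lemma Image_image_equiv_class:
  assumes "equiv A R" and "equiv B R'" and respects: "\<And>x y. (x, y) \<in> R \<Longrightarrow> (f x, f y) \<in> R'"
    and "x \<in> A"
  shows "R' `` (f ` (R `` {x})) = R' `` {f x}"
proof
  show "R' `` (f ` (R `` {x})) \<subseteq> R' `` {f x}"
  proof
    fix z assume "z \<in> R' `` (f ` (R `` {x}))"
    then obtain y where "(x, y) \<in> R" "(f y, z) \<in> R'" by auto
    then have "(f x, z) \<in> R'" using respects \<open>equiv B R'\<close> by (meson equiv_def transD)
    then show "z \<in> R' `` {f x}" by simp
  qed
  show "R' `` {f x} \<subseteq> R' `` (f ` (R `` {x}))"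
    using equiv_class_self[OF \<open>equiv A R\<close> \<open>x \<in> A\<close>] by auto
qed

lemma card_quotient_eq:
  assumes eA: "equiv A R" and eB: "equiv B R'"
    and maps: "\<And>x. x \<in> A \<Longrightarrow> f x \<in> B"
    and respects: "\<And>x y. (x, y) \<in> R \<Longrightarrow> (f x, f y) \<in> R'"
    and reflects: "\<And>x y. x \<in> A \<Longrightarrow> y \<in> A \<Longrightarrow> (f x, f y) \<in> R' \<Longrightarrow> (x, y) \<in> R"
    and onto: "\<And>y. y \<in> B \<Longrightarrow> \<exists>x\<in>A. (f x, y) \<in> R'"
  shows "card (A // R) = card (B // R')"
proof -
  define g where "g C = R' `` (f ` C)" for C
  have g_class: "g (R `` {x}) = R' `` {f x}" if "x \<in> A" for x
    unfolding g_def using Image_image_equiv_class[OF eA eB respects that] .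
  have "bij_betw g (A // R) (B // R')"
  proof (rule bij_betw_imageI)
    show "inj_on g (A // R)"
    proof (rule inj_onI, elim quotientE)
      fix C D x y assume "g C = g D" "C = R `` {x}" "x \<in> A" "D = R `` {y}" "y \<in> A"
      then have "(f x, f y) \<in> R'" using g_class eq_equiv_class_iff[OF eB] maps by metis
      then show "C = D"
        using reflects equiv_class_eq[OF eA] \<open>C = R `` {x}\<close> \<open>D = R `` {y}\<close> \<open>x \<in> A\<close> \<open>y \<in> A\<close>
        by blast
    qed
    show "g ` (A // R) = B // R'"
    proof
      show "g ` (A // R) \<subseteq> B // R'"
        using g_class maps by (force elim!: quotientE intro: quotientI)
      show "B // R' \<subseteq> g ` (A // R)"
      proof (rule subsetI, elim quotientE)
        fix D y assume "D = R' `` {y}" "y \<in> B"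
        then obtain x where "x \<in> A" "(f x, y) \<in> R'" using onto by blast
        then have "D = g (R `` {x})" using g_class equiv_class_eq[OF eB] \<open>D = R' `` {y}\<close> by simp
        then show "D \<in> g ` (A // R)" using \<open>x \<in> A\<close> by (auto intro: quotientI)
      qed
    qed
  qed
  then show ?thesis by (rule bij_betw_same_card)
qed

definition pullback :: "nat \<Rightarrow> (nat \<Rightarrow> 'a) \<Rightarrow> ('a \<Rightarrow> 'a) \<Rightarrow> nat \<Rightarrow> nat" where
  "pullback m e f k = (if k < m then inv_into {..<m} e (f (e k)) else k)"

lemma
  assumes e: "bij_betw e {..<m} J" and maps: "f ` J \<subseteq> J" and inj: "inj_on f J"
  shows pullback_permutes: "pullback m e f permutes {..<m}"
    and pullback_apply: "k < m \<Longrightarrow> e (pullback m e f k) = f (e k)"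
proof -
  have fe: "f (e k) \<in> e ` {..<m}" if "k < m" for k
    using that e maps bij_betw_imp_surj_on[OF e] by (auto dest: bij_betwE)
  show e_pullback: "e (pullback m e f k) = f (e k)" if "k < m" for k
    using f_inv_into_f[OF fe[OF that]] that by (simp add: pullback_def)
  show "pullback m e f permutes {..<m}"
  proof (rule permutes_lessThanI)
    show "pullback m e f k < m" if "k < m" for k
      using inv_into_into[OF fe[OF that]] that by (simp add: pullback_def)
    show "inj_on (pullback m e f) {..<m}"
    proof (rule inj_onI)
      fix k l assume k: "k \<in> {..<m}" and l: "l \<in> {..<m}" and "pullback m e f k = pullback m e f l"
      then have "f (e k) = f (e l)" using e_pullback by (metis lessThan_iff)
      moreover have "e k \<in> J" "e l \<in> J" using k l e by (auto dest: bij_betwE)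
      ultimately have "e k = e l" using inj by (auto dest: inj_onD)
      then show "k = l" using k l bij_betw_imp_inj_on[OF e] by (auto dest: inj_onD)
    qed
  qed (simp add: pullback_def)
qed

section \<open>Subgroups of the integer lattice and Hermite normal forms\<close>

locale Z2_subgroup =
  fixes G :: "(int \<times> int) set"
  assumes zero_mem: "(0, 0) \<in> G"
    and diff_mem: "(u1, u2) \<in> G \<Longrightarrow> (w1, w2) \<in> G \<Longrightarrow> (u1 - w1, u2 - w2) \<in> G"
begin

lemma neg_mem: "(u1, u2) \<in> G \<Longrightarrow> (- u1, - u2) \<in> G"
  using diff_mem[OF zero_mem] by simp

lemma add_mem: "(u1, u2) \<in> G \<Longrightarrow> (w1, w2) \<in> G \<Longrightarrow> (u1 + w1, u2 + w2) \<in> G"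
  using diff_mem[of u1 u2 "- w1" "- w2"] neg_mem by simp

lemma scale_mem:
  assumes "(u1, u2) \<in> G"
  shows "(z * u1, z * u2) \<in> G"
proof -
  have nat_scale: "(int k * u1, int k * u2) \<in> G" for k
  proof (induction k)
    case (Suc k)
    then have "(int k * u1 + u1, int k * u2 + u2) \<in> G" using add_mem assms by blast
    then show ?case by (simp add: algebra_simps)
  qed (simp add: zero_mem)
  show ?thesis
  proof (cases "z \<ge> 0")
    case True
    then show ?thesis using nat_scale[of "nat z"] by simp
  next
    case False
    then show ?thesis using neg_mem[OF nat_scale[of "nat (- z)"]] by simp
  qed
qed

end

lemma Z2_subgroup_gen_subgroup: "Z2_subgroup (gen_subgroup S)"
  by unfold_locales (auto intro: gen_subgroup.intros)

lemma gen_subgroup_image: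
  assumes additive: "\<And>p q. f (fst p - fst q, snd p - snd q)
        = (fst (f p) - fst (f q), snd (f p) - snd (f q))"
  shows "f ` gen_subgroup S = gen_subgroup (f ` S)"
proof
  have f_zero: "f (0, 0) = (0, 0)" using additive[of "(0, 0)" "(0, 0)"] by simp
  show "f ` gen_subgroup S \<subseteq> gen_subgroup (f ` S)"
  proof (rule image_subsetI)
    fix x assume "x \<in> gen_subgroup S"
    then show "f x \<in> gen_subgroup (f ` S)"
    proof (induction rule: gen_subgroup.induct)
      case (diff p1 p2 q1 q2)
      then show ?case
        using additive[of "(p1, p2)" "(q1, q2)"]
          gen_subgroup.diff[of "fst (f (p1, p2))" "snd (f (p1, p2))"]
        by simp
    qed (auto simp: f_zero intro: gen_subgroup.intros)
  qed
  show "gen_subgroup (f ` S) \<subseteq> f ` gen_subgroup S"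
  proof
    fix y assume "y \<in> gen_subgroup (f ` S)"
    then show "y \<in> f ` gen_subgroup S"
    proof (induction rule: gen_subgroup.induct)
      case zero
      then show ?case using f_zero gen_subgroup.zero by (metis image_eqI)
    next
      case (diff p1 p2 q1 q2)
      then obtain x1 x2 where "x1 \<in> gen_subgroup S" "f x1 = (p1, p2)"
              "x2 \<in> gen_subgroup S" "f x2 = (q1, q2)"
        by auto
      then show ?case
        using additive[of x1 x2] gen_subgroup.diff[of "fst x1" "snd x1" S "fst x2" "snd x2"]
        by (metis fst_conv snd_conv prod.collapse image_eqI)
    qed (auto intro: gen_subgroup.intros)
  qed
qed

definition hnf_map :: "nat \<Rightarrow> nat \<Rightarrow> nat \<Rightarrow> int \<times> int \<Rightarrow> int \<times> int" where
  "hnf_map a b c p = (int a * fst p + int b * snd p, int c * snd p)"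

definition hnf_lattice :: "nat \<Rightarrow> nat \<Rightarrow> nat \<Rightarrow> (int \<times> int) set" where
  "hnf_lattice a b c = range (hnf_map a b c)"

lemma mem_hnf_lattice_iff:
  "(u, w) \<in> hnf_lattice a b c \<longleftrightarrow> (\<exists>x y. u = int a * x + int b * y \<and> w = int c * y)"
  by (auto simp: hnf_lattice_def hnf_map_def image_iff)

lemma hnf_map_diff:
  "hnf_map a b c (fst p - fst q, snd p - snd q)
     = (fst (hnf_map a b c p) - fst (hnf_map a b c q),
       snd (hnf_map a b c p) - snd (hnf_map a b c q))"
  by (simp add: hnf_map_def algebra_simps)

lemma Z2_subgroup_hnf_lattice: "Z2_subgroup (hnf_lattice a b c)"
proof
  show "(0, 0) \<in> hnf_lattice a b c"
    unfolding mem_hnf_lattice_iff by (rule exI[of _ 0], rule exI[of _ 0]) simp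
  fix u1 u2 w1 w2
  assume "(u1, u2) \<in> hnf_lattice a b c" "(w1, w2) \<in> hnf_lattice a b c"
  then obtain x1 y1 x2 y2 where "u1 = int a * x1 + int b * y1" "u2 = int c * y1"
    "w1 = int a * x2 + int b * y2" "w2 = int c * y2" by (auto simp: mem_hnf_lattice_iff)
  then have "u1 - w1 = int a * (x1 - x2) + int b * (y1 - y2) \<and> u2 - w2 = int c * (y1 - y2)"
    by (simp add: algebra_simps)
  then show "(u1 - w1, u2 - w2) \<in> hnf_lattice a b c" unfolding mem_hnf_lattice_iff by blast
qed

lemma inj_hnf_map: "0 < a \<Longrightarrow> 0 < c \<Longrightarrow> inj (hnf_map a b c)"
  by (rule injI) (auto simp: hnf_map_def prod_eq_iff)

lemma hnf_lattice_basis: "(int a, 0) \<in> hnf_lattice a b c" "(int b, int c) \<in> hnf_lattice a b c"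
  unfolding mem_hnf_lattice_iff
  by (rule exI[of _ 1], rule exI[of _ 0], simp) (rule exI[of _ 0], rule exI[of _ 1], simp)

lemma hnf_lattice_axis_iff: "0 < c \<Longrightarrow> (u, 0) \<in> hnf_lattice a b c \<longleftrightarrow> int a dvd u"
  by (auto simp: mem_hnf_lattice_iff)

lemma hnf_lattice_height_iff: "(\<exists>u. (u, w) \<in> hnf_lattice a b c) \<longleftrightarrow> int c dvd w"
  by (auto simp: mem_hnf_lattice_iff)

lemma hnf_lattice_eq_imp_eq:
  assumes "0 < a" "0 < c" "b < a" "0 < a'" "0 < c'" "b' < a'"
    and L: "hnf_lattice a b c = hnf_lattice a' b' c'"
  shows "a = a' \<and> b = b' \<and> c = c'"
proof -
  have "int a dvd u \<longleftrightarrow> int a' dvd u" for u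
    using hnf_lattice_axis_iff[of c u a b] hnf_lattice_axis_iff[of c' u a' b'] assms by simp
  then have a: "a = a'" by (metis dvd_antisym dvd_refl of_nat_dvd_iff)
  have "int c dvd w \<longleftrightarrow> int c' dvd w" for w
    by (metis L hnf_lattice_height_iff)
  then have c: "c = c'" by (metis dvd_antisym dvd_refl of_nat_dvd_iff)
  have "(int b, int c) \<in> hnf_lattice a' b' c'" "(int b', int c') \<in> hnf_lattice a' b' c'"
    using L hnf_lattice_basis by auto
  then have "(int b - int b', 0) \<in> hnf_lattice a' b' c'"
    using Z2_subgroup.diff_mem[OF Z2_subgroup_hnf_lattice] c by fastforce
  then obtain x where "int b - int b' = int a * x" using hnf_lattice_axis_iff assms a by blast
  moreover have "\<bar>int b - int b'\<bar> < int a" using assms a by linarith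
  ultimately have "x = 0" using abs_mult_less_imp_zero by metis
  then show ?thesis using a c \<open>int b - int b' = int a * x\<close> by simp
qed

context Z2_subgroup
begin

lemma hnf_lattice_subset:
  assumes "(int a, 0) \<in> G" and "(int b, int c) \<in> G"
  shows "hnf_lattice a b c \<subseteq> G"
proof clarify
  fix u w assume "(u, w) \<in> hnf_lattice a b c"
  then obtain x y where "u = x * int a + y * int b" "w = 0 + y * int c"
    by (auto simp: mem_hnf_lattice_iff algebra_simps)
  then show "(u, w) \<in> G" using add_mem scale_mem assms by (metis mult_zero_right)
qed

lemma subset_hnf_lattice:
  assumes "0 < a" and "0 < c" and a0: "(int a, 0) \<in> G" and bc: "(int b, int c) \<in> G"
    and a_min: "\<And>r. 0 < r \<Longrightarrow> r < a \<Longrightarrow> (int r, 0) \<notin> G"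
    and c_min: "\<And>u r. 0 < r \<Longrightarrow> r < c \<Longrightarrow> (u, int r) \<notin> G"
  shows "G \<subseteq> hnf_lattice a b c"
proof clarify
  fix u w assume uw: "(u, w) \<in> G"
  define y where "y = w div int c"
  define u' where "u' = u - y * int b"
  have "(u', w mod int c) \<in> G"
    using add_mem[OF uw scale_mem[OF bc, of "- y"]]
      by (simp add: u'_def y_def minus_div_mult_eq_mod)
  moreover have "w mod int c = 0"
  proof (rule ccontr)
    assume "w mod int c \<noteq> 0"
    moreover have "0 \<le> w mod int c" "w mod int c < int c" using \<open>0 < c\<close> by simp_all
    ultimately show False
      using c_min[of "nat (w mod int c)" u'] \<open>(u', w mod int c) \<in> G\<close> by (simp add: nat_less_iff)
  qed
  ultimately have w: "w = int c * y" and u'G: "(u', 0) \<in> G"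
    by (auto simp: y_def)
  define x where "x = u' div int a"
  have "(u' mod int a, 0) \<in> G"
    using add_mem[OF u'G scale_mem[OF a0, of "- x"]] by (simp add: x_def minus_div_mult_eq_mod)
  have "u' mod int a = 0"
  proof (rule ccontr)
    assume "u' mod int a \<noteq> 0"
    moreover have "0 \<le> u' mod int a" "u' mod int a < int a" using \<open>0 < a\<close> by simp_all
    ultimately show False
      using a_min[of "nat (u' mod int a)"] \<open>(u' mod int a, 0) \<in> G\<close> by (simp add: nat_less_iff)
  qed
  then have "u' = int a * x" unfolding x_def
    by (metis add.right_neutral div_mult_mod_eq mult.commute)
  then have "u = int a * x + int b * y" unfolding u'_def by (simp add: algebra_simps)
  then show "(u, w) \<in> hnf_lattice a b c" using w by (auto simp: mem_hnf_lattice_iff)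
qed

lemma ex_hnf_basis:
  assumes "(int k1, 0) \<in> G" "0 < k1" and "(0, int k2) \<in> G" "0 < k2"
  shows "\<exists>a b c. 0 < a \<and> 0 < c \<and> b < a \<and> G = hnf_lattice a b c"
proof -
  define c where "c = (LEAST r. 0 < r \<and> (\<exists>u. (u, int r) \<in> G))"
  have "0 < c" and "\<exists>u. (u, int c) \<in> G"
    using LeastI_ex[of "\<lambda>r. 0 < r \<and> (\<exists>u. (u, int r) \<in> G)"] assms(3,4) unfolding c_def by blast+
  then obtain u0 where u0: "(u0, int c) \<in> G" by blast
  have c_min: "\<And>u r. 0 < r \<Longrightarrow> r < c \<Longrightarrow> (u, int r) \<notin> G"
    unfolding c_def using not_less_Least by blast
  define a where "a = (LEAST r. 0 < r \<and> (int r, 0) \<in> G)"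
  have "0 < a" and a0: "(int a, 0) \<in> G"
    using LeastI_ex[of "\<lambda>r. 0 < r \<and> (int r, 0) \<in> G"] assms(1,2) unfolding a_def by blast+
  have a_min: "\<And>r. 0 < r \<Longrightarrow> r < a \<Longrightarrow> (int r, 0) \<notin> G"
    unfolding a_def using not_less_Least by blast
  define b where "b = nat (u0 mod int a)"
  have "b < a" using \<open>0 < a\<close> by (simp add: b_def nat_less_iff)
  have "(int b, int c) \<in> G"
    using add_mem[OF u0 scale_mem[OF a0, of "- (u0 div int a)"]] \<open>0 < a\<close>
    by (simp add: b_def minus_div_mult_eq_mod)
  then have "G = hnf_lattice a b c"
    using subset_hnf_lattice[OF \<open>0 < a\<close> \<open>0 < c\<close> a0 _ a_min c_min] hnf_lattice_subset[OF a0] by blast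
  then show ?thesis using \<open>0 < a\<close> \<open>0 < c\<close> \<open>b < a\<close> by blast
qed

end

section \<open>Walks and translation isomorphisms\<close>

locale square_tiling =
  fixes n :: nat and h v :: "nat \<Rightarrow> nat"
  assumes h_permutes: "h permutes {..<n}" and v_permutes: "v permutes {..<n}"
begin

lemma h_less: "i < n \<Longrightarrow> h i < n" and v_less: "i < n \<Longrightarrow> v i < n"
  and inv_h_less: "i < n \<Longrightarrow> inv h i < n" and inv_v_less: "i < n \<Longrightarrow> inv v i < n"
  using h_permutes v_permutes permutes_inv[OF h_permutes] permutes_inv[OF v_permutes]
  by (auto intro: permutes_lessThan_less)

lemma h_eq_self: "\<not> i < n \<Longrightarrow> h i = i" and v_eq_self: "\<not> i < n \<Longrightarrow> v i = i"
  using h_permutes v_permutes by (auto intro: permutes_not_in)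

lemma h_inv_h [simp]: "h (inv h x) = x" and inv_h_h [simp]: "inv h (h x) = x"
  and v_inv_v [simp]: "v (inv v x) = x" and inv_v_v [simp]: "inv v (v x) = x"
  using permutes_inverses[OF h_permutes] permutes_inverses[OF v_permutes] by auto

lemma h_funpow_less: "i < n \<Longrightarrow> (h ^^ k) i < n" and v_funpow_less: "i < n \<Longrightarrow> (v ^^ k) i < n"
  by (induction k) (auto simp: h_less v_less)

lemma walk_less: "walk n h v i j a b \<Longrightarrow> i < n \<and> j < n"
  by (induction rule: walk.induct) (auto simp: h_less v_less)

lemma walk_append:
  assumes "walk n h v i j a b" and "walk n h v j k c d"
  shows "walk n h v i k (a + c) (b + d)"
  using assms(2,1)
proof (induction rule: walk.induct)
  case (right j k c d)
  then show ?case using walk.right[of n h v i k "a + c" "b + d"] by (simp add: algebra_simps)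
next
  case (up j k c d)
  then show ?case using walk.up[of n h v i k "a + c" "b + d"] by (simp add: algebra_simps)
next
  case (left j k c d l)
  then show ?case using walk.left[of n h v i k "a + c" "b + d" l] by (simp add: algebra_simps)
next
  case (down j k c d l)
  then show ?case using walk.down[of n h v i k "a + c" "b + d" l] by (simp add: algebra_simps)
qed simp

lemma walk_inv_h: "walk n h v i j a b \<Longrightarrow> walk n h v i (inv h j) (a - 1) b"
  using walk.left[of n h v i j a b "inv h j"] walk_less inv_h_less by auto

lemma walk_inv_v: "walk n h v i j a b \<Longrightarrow> walk n h v i (inv v j) a (b - 1)"
  using walk.down[of n h v i j a b "inv v j"] walk_less inv_v_less by auto

lemma walk_h_funpow: "walk n h v i j a b \<Longrightarrow> walk n h v i ((h ^^ k) j) (a + int k) b"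
  by (induction k) (auto dest: walk.right simp: algebra_simps)

lemma walk_v_funpow: "walk n h v i j a b \<Longrightarrow> walk n h v i ((v ^^ k) j) a (b + int k)"
  by (induction k) (auto dest: walk.up simp: algebra_simps)

lemma walk_inv_h_funpow: "walk n h v i j a b \<Longrightarrow> walk n h v i ((inv h ^^ k) j) (a - int k) b"
  by (induction k) (auto dest: walk_inv_h simp: algebra_simps)

lemma walk_inv_v_funpow: "walk n h v i j a b \<Longrightarrow> walk n h v i ((inv v ^^ k) j) a (b - int k)"
  by (induction k) (auto dest: walk_inv_v simp: algebra_simps)

lemma walk_rev: "walk n h v i j a b \<Longrightarrow> walk n h v j i (- a) (- b)"
proof (induction rule: walk.induct)
  case (refl i)
  then show ?case by (simp add: walk.refl)
next
  case (right i j a b)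
  then have "j < n" "walk n h v (h j) (h j) 0 0" using walk_less h_less walk.refl by blast+
  then have "walk n h v (h j) j (0 - 1) 0" using walk.left[where k = j] by blast
  from walk_append[OF this right.IH] show ?case by (simp add: algebra_simps)
next
  case (up i j a b)
  then have "j < n" "walk n h v (v j) (v j) 0 0" using walk_less v_less walk.refl by blast+
  then have "walk n h v (v j) j 0 (0 - 1)" using walk.down[where k = j] by blast
  from walk_append[OF this up.IH] show ?case by (simp add: algebra_simps)
next
  case (left i j a b k)
  then have "walk n h v k j 1 0" using walk.right[OF walk.refl[of k]] by auto
  from walk_append[OF this left.IH] show ?case by (simp add: algebra_simps)
next
  case (down i j a b k)
  then have "walk n h v k j 0 1" using walk.up[OF walk.refl[of k]] by auto
  from walk_append[OF this down.IH] show ?case by (simp add: algebra_simps)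
qed

lemma walk_commutator: "x < n \<Longrightarrow> walk n h v x (commutator h v x) 0 0"
  using walk_inv_v[OF walk_inv_h[OF walk.up[OF walk.right[OF walk.refl]]]]
  by (simp add: commutator_def)

lemma bij_commutator: "bij (commutator h v)"
  unfolding commutator_def
  using permutes_bij[OF h_permutes] permutes_bij[OF v_permutes] bij_comp bij_imp_bij_inv
  by (metis (no_types, lifting) bij_betw_inv_into inv_def)

lemma commutator_neq_iff: "commutator h v i \<noteq> i \<longleftrightarrow> v (h i) \<noteq> h (v i)"
  by (simp add: commutator_def) (metis h_inv_h inv_h_h v_inv_v inv_v_v)

lemma rtrancl_sts_step_imp_walk:
  "(i, j) \<in> (sts_step n h v)\<^sup>* \<Longrightarrow> i < n \<Longrightarrow> \<exists>a b. walk n h v i j a b"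
proof (induction rule: rtrancl_induct)
  case base
  then show ?case using walk.refl by blast
next
  case (step j k)
  then obtain a b where w: "walk n h v i j a b" by blast
  have "k = h j \<or> k = v j \<or> j = h k \<or> j = v k" using step(2) by (auto simp: sts_step_def)
  moreover have "k < n" if "j = h k \<or> j = v k"
    using that walk_less[OF w] h_eq_self v_eq_self by fastforce
  ultimately show ?case using walk.right[OF w] walk.up[OF w] walk.left[OF w] walk.down[OF w]
    by blast
qed

lemma walk_imp_rtrancl_sts_step: "walk n h v i j a b \<Longrightarrow> (i, j) \<in> (sts_step n h v)\<^sup>*"
proof (induction rule: walk.induct)
  case (right i j a b)
  then have "(j, h j) \<in> sts_step n h v" using walk_less by (auto simp: sts_step_def)
  with right.IH show ?case by (rule rtrancl_into_rtrancl)
next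
  case (up i j a b)
  then have "(j, v j) \<in> sts_step n h v" using walk_less by (auto simp: sts_step_def)
  with up.IH show ?case by (rule rtrancl_into_rtrancl)
next
  case (left i j a b k)
  then have "(j, k) \<in> sts_step n h v" using walk_less by (auto simp: sts_step_def)
  with left.IH show ?case by (rule rtrancl_into_rtrancl)
next
  case (down i j a b k)
  then have "(j, k) \<in> sts_step n h v" using walk_less by (auto simp: sts_step_def)
  with down.IH show ?case by (rule rtrancl_into_rtrancl)
qed simp

lemma connected_iff_walks:
  "(\<forall>i<n. \<forall>j<n. (i, j) \<in> (sts_step n h v)\<^sup>*) \<longleftrightarrow> (\<forall>i<n. \<forall>j<n. \<exists>a b. walk n h v i j a b)"
  using rtrancl_sts_step_imp_walk walk_imp_rtrancl_sts_step by blast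

lemma commutator_moved_eq: "{i. i < n \<and> commutator h v i \<noteq> i} = {i. i < n \<and> v (h i) \<noteq> h (v i)}"
  using commutator_neq_iff by blast

end

lemma sts_H2_iff:
  "(h, v) \<in> sts_H2 n \<longleftrightarrow> square_tiling n h v \<and> (\<forall>i<n. \<forall>j<n. \<exists>a b. walk n h v i j a b)
     \<and> card {i. i < n \<and> v (h i) \<noteq> h (v i)} = 3"
proof (cases "square_tiling n h v")
  case True
  then show ?thesis
    by (simp add: sts_H2_def sts_def square_tiling.connected_iff_walks
      square_tiling.commutator_moved_eq)
      (simp add: square_tiling_def)
next
  case False
  then show ?thesis by (auto simp: sts_H2_def sts_def square_tiling_def)
qed

definition block_v :: "nat \<Rightarrow> nat \<Rightarrow> (nat \<Rightarrow> nat) \<Rightarrow> (nat \<Rightarrow> nat) \<Rightarrow> nat \<Rightarrow> nat" where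
  "block_v b c h v x = v ((h ^^ b) ((v ^^ (c - 1)) x))"

lemma (in square_tiling) walk_block_v:
  assumes "0 < c" "i < n"
  shows "walk n h v i (block_v b c h v i) (int b) (int c)"
proof -
  have "walk n h v i ((v ^^ (c - 1)) i) 0 (0 + int (c - 1))"
    by (rule walk_v_funpow[OF walk.refl[OF \<open>i < n\<close>]])
  from walk.up[OF walk_h_funpow[OF this, of b]] show ?thesis
    using \<open>0 < c\<close> by (simp add: block_v_def of_nat_diff)
qed

definition iso_via ::
  "nat \<Rightarrow> (nat \<Rightarrow> nat) \<Rightarrow> (nat \<Rightarrow> nat) \<Rightarrow> (nat \<Rightarrow> nat) \<Rightarrow> (nat \<Rightarrow> nat) \<Rightarrow> (nat \<Rightarrow> nat) \<Rightarrow> bool" where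
  "iso_via n \<sigma> h v h' v' \<longleftrightarrow> \<sigma> permutes {..<n} \<and> (\<forall>x. h' (\<sigma> x) = \<sigma> (h x) \<and> v' (\<sigma> x) = \<sigma> (v x))"

lemma sts_iso_iff: "((h, v), (h', v')) \<in> sts_iso n \<longleftrightarrow> (\<exists>\<sigma>. iso_via n \<sigma> h v h' v')"
  by (auto simp: sts_iso_def iso_via_def fun_eq_iff)

lemma iso_via_permutes: "iso_via n \<sigma> h v h' v' \<Longrightarrow> \<sigma> permutes {..<n}"
  and iso_via_h: "iso_via n \<sigma> h v h' v' \<Longrightarrow> h' (\<sigma> x) = \<sigma> (h x)"
  and iso_via_v: "iso_via n \<sigma> h v h' v' \<Longrightarrow> v' (\<sigma> x) = \<sigma> (v x)"
  by (simp_all add: iso_via_def)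

lemma iso_via_id: "iso_via n id h v h v"
  by (simp add: iso_via_def permutes_id)

lemma iso_via_inv:
  assumes "iso_via n \<sigma> h v h' v'"
  shows "iso_via n (inv \<sigma>) h' v' h v"
proof -
  have \<sigma>: "\<sigma> permutes {..<n}" and "\<And>x. h' (\<sigma> x) = \<sigma> (h x)" "\<And>x. v' (\<sigma> x) = \<sigma> (v x)"
    using assms by (auto simp: iso_via_def)
  then have "h (inv \<sigma> y) = inv \<sigma> (h' y)" "v (inv \<sigma> y) = inv \<sigma> (v' y)" for y
    using permutes_inverses[OF \<sigma>] by metis+
  then show ?thesis using permutes_inv[OF \<sigma>] by (simp add: iso_via_def)
qed

lemma iso_via_comp:
  "iso_via n \<sigma> h v h' v' \<Longrightarrow> iso_via n \<tau> h' v' h'' v'' \<Longrightarrow> iso_via n (\<tau> \<circ> \<sigma>) h v h'' v''"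
  by (simp add: iso_via_def permutes_compose)

lemma iso_via_less: "iso_via n \<sigma> h v h' v' \<Longrightarrow> i < n \<Longrightarrow> \<sigma> i < n"
  unfolding iso_via_def using permutes_lessThan_less by blast

lemma walk_iso_via:
  assumes iso: "iso_via n \<sigma> h v h' v'" and "walk n h v i j a b"
  shows "walk n h' v' (\<sigma> i) (\<sigma> j) a b"
  using assms(2)
proof (induction rule: walk.induct)
  case (refl i)
  then show ?case using iso_via_less[OF iso] walk.refl by blast
next
  case (right i j a b)
  then show ?case using walk.right iso_via_h[OF iso] by metis
next
  case (up i j a b)
  then show ?case using walk.up iso_via_v[OF iso] by metis
next
  case (left i j a b k)
  then show ?case using walk.left iso_via_h[OF iso] iso_via_less[OF iso] by metis
next
  case (down i j a b k)
  then show ?case using walk.down iso_via_v[OF iso] iso_via_less[OF iso] by metis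
qed

lemma iso_via_funpow:
  assumes "iso_via n \<sigma> h v h' v'"
  shows "\<sigma> ((h ^^ i) x) = (h' ^^ i) (\<sigma> x)" and "\<sigma> ((v ^^ i) x) = (v' ^^ i) (\<sigma> x)"
  by (induction i) (simp_all add: iso_via_h[OF assms, symmetric] iso_via_v[OF assms, symmetric])

lemma iso_via_block_v:
  assumes "iso_via n \<sigma> h v h' v'"
  shows "\<sigma> (block_v b c h v x) = block_v b c h' v' (\<sigma> x)"
  by (simp add: block_v_def iso_via_funpow[OF assms] iso_via_v[OF assms, symmetric])

lemma period_lattice_iso_via:
  assumes "iso_via n \<sigma> h v h' v'"
  shows "period_lattice n h v = period_lattice n h' v'"
proof -
  have closed_walks_subset: "{(a, b). \<exists>i<n. walk n h v i i a b}
      \<subseteq> {(a, b). \<exists>i<n. walk n h' v' i i a b}"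
    if "iso_via n \<sigma> h v h' v'" for \<sigma> h v h' v'
    using walk_iso_via[OF that] iso_via_less[OF that] by blast
  show ?thesis unfolding period_lattice_def
    using closed_walks_subset[OF assms] closed_walks_subset[OF iso_via_inv[OF assms]] by force
qed

lemma iso_via_conj:
  assumes iso: "iso_via n \<sigma> h v h' v'"
  shows "h' = \<sigma> \<circ> h \<circ> inv \<sigma>" "v' = \<sigma> \<circ> v \<circ> inv \<sigma>"
proof -
  have "\<sigma> (inv \<sigma> y) = y" for y using permutes_inverses(1)[OF iso_via_permutes[OF iso]] .
  then have "h' y = \<sigma> (h (inv \<sigma> y))" "v' y = \<sigma> (v (inv \<sigma> y))" for y
    using iso_via_h[OF iso, of "inv \<sigma> y"] iso_via_v[OF iso, of "inv \<sigma> y"] by simp_all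
  then show "h' = \<sigma> \<circ> h \<circ> inv \<sigma>" "v' = \<sigma> \<circ> v \<circ> inv \<sigma>" by auto
qed

lemma sts_H2_iso_via:
  assumes iso: "iso_via n \<sigma> h v h' v'" and "(h, v) \<in> sts_H2 n"
  shows "(h', v') \<in> sts_H2 n"
proof -
  have \<sigma>: "\<sigma> permutes {..<n}" using iso by (simp add: iso_via_def)
  have T: "square_tiling n h v" and conn: "\<forall>i<n. \<forall>j<n. \<exists>a b. walk n h v i j a b"
    and card3: "card {i. i < n \<and> v (h i) \<noteq> h (v i)} = 3"
    using \<open>(h, v) \<in> sts_H2 n\<close> by (auto simp: sts_H2_iff)
  have "square_tiling n h' v'"
    using T iso_via_conj[OF iso] \<sigma> by (simp add: square_tiling_def permutes_compose permutes_inv)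
  moreover have "\<exists>a b. walk n h' v' i j a b" if "i < n" "j < n" for i j
  proof -
    have "inv \<sigma> i < n" "inv \<sigma> j < n" using that permutes_inv[OF \<sigma>] permutes_lessThan_less by blast+
    then obtain a b where "walk n h v (inv \<sigma> i) (inv \<sigma> j) a b" using conn by blast
    from walk_iso_via[OF iso this] show ?thesis using permutes_inverses(1)[OF \<sigma>] by metis
  qed
  moreover have "{i. i < n \<and> v' (h' i) \<noteq> h' (v' i)} = \<sigma> ` {i. i < n \<and> v (h i) \<noteq> h (v i)}"
  proof -
    have moved: "v' (h' (\<sigma> x)) \<noteq> h' (v' (\<sigma> x)) \<longleftrightarrow> v (h x) \<noteq> h (v x)" for x
      by (simp add: iso_via_h[OF iso] iso_via_v[OF iso] inj_eq[OF permutes_inj[OF \<sigma>]])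
    show ?thesis
    proof (intro set_eqI iffI)
      fix i assume i: "i \<in> {i. i < n \<and> v' (h' i) \<noteq> h' (v' i)}"
      have "\<sigma> (inv \<sigma> i) = i" using permutes_inverses(1)[OF \<sigma>] .
      moreover have "inv \<sigma> i < n" using i permutes_inv[OF \<sigma>] permutes_lessThan_less by blast
      ultimately show "i \<in> \<sigma> ` {i. i < n \<and> v (h i) \<noteq> h (v i)}"
        using i moved[of "inv \<sigma> i"] by (intro image_eqI[of _ _ "inv \<sigma> i"]) auto
    next
      fix i assume "i \<in> \<sigma> ` {i. i < n \<and> v (h i) \<noteq> h (v i)}"
      then show "i \<in> {i. i < n \<and> v' (h' i) \<noteq> h' (v' i)}" using moved iso_via_less[OF iso] by blast
    qed
  qed
  then have "card {i. i < n \<and> v' (h' i) \<noteq> h' (v' i)} = 3"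
    using card3 card_image[OF inj_on_subset[OF permutes_inj[OF \<sigma>] subset_UNIV]] by simp
  ultimately show ?thesis by (simp add: sts_H2_iff)
qed

definition H2_iso :: "nat \<Rightarrow> (((nat \<Rightarrow> nat) \<times> (nat \<Rightarrow> nat)) \<times> ((nat \<Rightarrow> nat) \<times> (nat \<Rightarrow> nat))) set" where
  "H2_iso n = sts_iso n \<inter> sts_H2 n \<times> sts_H2 n"

lemma H2_iso_iff:
  "(x, y) \<in> H2_iso n \<longleftrightarrow> x \<in> sts_H2 n \<and> (\<exists>\<sigma>. iso_via n \<sigma> (fst x) (snd x) (fst y) (snd y))"
proof -
  obtain h v h' v' where "x = (h, v)" "y = (h', v')" by (cases x, cases y)
  then show ?thesis using sts_H2_iso_via[of n _ h v h' v'] by (auto simp: H2_iso_def sts_iso_iff)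
qed

lemma equiv_H2_iso: "equiv (sts_H2 n) (H2_iso n)"
proof (rule equivI)
  show "refl_on (sts_H2 n) (H2_iso n)"
    unfolding refl_on_def H2_iso_def using iso_via_id sts_iso_iff by fastforce
  show "sym (H2_iso n)"
    using iso_via_inv sts_H2_iso_via by (fastforce intro: symI simp: H2_iso_iff)
  show "trans (H2_iso n)"
    using iso_via_comp by (fastforce intro: transI simp: H2_iso_iff)
qed (auto simp: H2_iso_def)

lemma E_eq_quotient_H2_iso: "E n = sts_H2 n // H2_iso n"
proof -
  have "sts_iso n `` {x} = H2_iso n `` {x}" if "x \<in> sts_H2 n" for x
    using that H2_iso_iff[of x _ n] sts_iso_iff[of "fst x" "snd x" _ _ n] by auto
  then show ?thesis unfolding E_def quotient_def by auto
qed

lemma finite_sts_H2: "finite (sts_H2 n)"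
proof (rule finite_subset)
  show "sts_H2 n \<subseteq> {p. p permutes {..<n}} \<times> {p. p permutes {..<n}}"
    by (auto simp: sts_H2_def sts_def)
qed (simp add: finite_permutations)

section \<open>Reduction modulo a lattice in Hermite normal form\<close>

locale hnf_triple =
  fixes a b c :: nat
  assumes a_pos: "0 < a" and c_pos: "0 < c" and b_less: "b < a"
begin

sublocale L: Z2_subgroup "hnf_lattice a b c"
  by (rule Z2_subgroup_hnf_lattice)

definition box_rep :: "int \<times> int \<Rightarrow> nat \<times> nat" where
  "box_rep p = (nat ((fst p - int b * (snd p div int c)) mod int a), nat (snd p mod int c))"

lemma box_rep_less: "fst (box_rep p) < a" "snd (box_rep p) < c"
  unfolding box_rep_def using a_pos c_pos by (auto simp: nat_less_iff)

lemma box_rep_diff_mem: "(fst p - int (fst (box_rep p)), snd p - int (snd (box_rep p)))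
    \<in> hnf_lattice a b c"
proof -
  define y where "y = snd p div int c"
  define r where "r = fst p - int b * y"
  have "fst p - int (fst (box_rep p)) = int a * (r div int a) + int b * y"
    using a_pos div_mult_mod_eq[of r "int a"] by (simp add: box_rep_def r_def y_def algebra_simps)
  moreover have "snd p - int (snd (box_rep p)) = int c * y"
    using c_pos div_mult_mod_eq[of "snd p" "int c"] by (simp add: box_rep_def y_def algebra_simps)
  ultimately show ?thesis unfolding mem_hnf_lattice_iff by blast
qed

lemma box_eq_if_diff_mem:
  assumes "s < a" "s' < a" "t < c" "t' < c"
      and "(int s - int s', int t - int t') \<in> hnf_lattice a b c"
  shows "s = s' \<and> t = t'"
proof -
  obtain x y where xy: "int s - int s' = int a * x + int b * y" "int t - int t' = int c * y"
    using assms(5) unfolding mem_hnf_lattice_iff by blast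
  have "\<bar>int c * y\<bar> < int c" using xy(2) assms(3,4) by linarith
  then have "y = 0" by (rule abs_mult_less_imp_zero)
  then have "\<bar>int a * x\<bar> < int a" using xy(1) assms(1,2) by simp
  then have "x = 0" by (rule abs_mult_less_imp_zero)
  then show ?thesis using xy \<open>y = 0\<close> by simp
qed

lemma box_rep_eq_iff: "box_rep p = box_rep q \<longleftrightarrow> (fst p - fst q, snd p - snd q) \<in> hnf_lattice a b c"
proof
  assume "box_rep p = box_rep q"
  then show "(fst p - fst q, snd p - snd q) \<in> hnf_lattice a b c"
    using L.diff_mem[OF box_rep_diff_mem[of p] box_rep_diff_mem[of q]] by simp
next
  assume "(fst p - fst q, snd p - snd q) \<in> hnf_lattice a b c"
  from L.add_mem[OF L.diff_mem[OF this box_rep_diff_mem[of p]] box_rep_diff_mem[of q]]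
  have "(int (fst (box_rep p)) - int (fst (box_rep q)),
      int (snd (box_rep p)) - int (snd (box_rep q)))
      \<in> hnf_lattice a b c"
    by (simp add: algebra_simps)
  then show "box_rep p = box_rep q" using box_eq_if_diff_mem box_rep_less by (metis prod_eq_iff)
qed

lemma box_rep_of_nat: "s < a \<Longrightarrow> t < c \<Longrightarrow> box_rep (int s, int t) = (s, t)"
  unfolding box_rep_def by simp

lemma box_rep_mod: "t < c \<Longrightarrow> box_rep (int s, int t) = (s mod a, t)"
  unfolding box_rep_def by (simp add: nat_mod_distrib)

lemma box_rep_mem: "p \<in> hnf_lattice a b c \<Longrightarrow> box_rep p = (0, 0)"
  using box_rep_eq_iff[of p "(0, 0)"] box_rep_of_nat[of 0 0] a_pos c_pos by simp

lemma box_rep_shift: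
  "box_rep (int (fst (box_rep p)) + u, int (snd (box_rep p)) + w) = box_rep (fst p + u, snd p + w)"
  using L.neg_mem[OF box_rep_diff_mem[of p]] by (simp add: box_rep_eq_iff algebra_simps)

text \<open>The position of the squares whose upper right corner lies on the lattice.\<close>

definition cone_pos :: "nat \<times> nat" where
  "cone_pos = box_rep (- 1, - 1)"

lemma cone_pos_eq: "cone_pos = (if b = 0 then a - 1 else b - 1, c - 1)"
proof -
  define s where "s = (if b = 0 then a - 1 else b - 1)"
  have "s < a" "c - 1 < c" using a_pos b_less c_pos by (auto simp: s_def)
  have "(- 1 - int s, - 1 - int (c - 1)) \<in> hnf_lattice a b c"
    using L.neg_mem[OF hnf_lattice_basis(2)] L.neg_mem[OF hnf_lattice_basis(1)]
      L.add_mem[OF L.neg_mem[OF hnf_lattice_basis(1)] L.neg_mem[OF hnf_lattice_basis(2)]]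
      a_pos b_less c_pos
    by (auto simp: s_def of_nat_diff)
  then have "cone_pos = box_rep (int s, int (c - 1))"
    unfolding cone_pos_def by (simp add: box_rep_eq_iff)
  then show ?thesis using box_rep_of_nat[OF \<open>s < a\<close> \<open>c - 1 < c\<close>] by (simp add: s_def)
qed

section \<open>Blowing up a surface along a lattice\<close>

definition sq :: "nat \<Rightarrow> nat \<Rightarrow> nat \<Rightarrow> nat" where
  "sq k s t = k * (a * c) + s * c + t"

definition block :: "nat \<Rightarrow> nat" where
  "block x = x div (a * c)"

definition col :: "nat \<Rightarrow> nat" where
  "col x = x mod (a * c) div c"

definition row :: "nat \<Rightarrow> nat" where
  "row x = x mod c"

lemma col_row_less: "s < a \<Longrightarrow> t < c \<Longrightarrow> s * c + t < a * c"
proof -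
  assume "s < a" "t < c"
  then have "s * c + t < (s + 1) * c" by simp
  also have "\<dots> \<le> a * c" using \<open>s < a\<close> by (intro mult_right_mono) auto
  finally show ?thesis .
qed

lemma block_sq [simp]: "s < a \<Longrightarrow> t < c \<Longrightarrow> block (sq k s t) = k"
  unfolding sq_def block_def using col_row_less a_pos c_pos by (simp add: add.assoc)

lemma col_sq [simp]: "s < a \<Longrightarrow> t < c \<Longrightarrow> col (sq k s t) = s"
proof -
  assume st: "s < a" "t < c"
  then have "sq k s t mod (a * c) = s * c + t"
    unfolding sq_def using col_row_less[OF st] by (simp add: add.assoc)
  then show ?thesis unfolding col_def using st by simp
qed

lemma row_sq [simp]: "t < c \<Longrightarrow> row (sq k s t) = t"
proof -
  have "sq k s t = (k * a + s) * c + t" by (simp add: sq_def algebra_simps)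
  then show "t < c \<Longrightarrow> row (sq k s t) = t" unfolding row_def by simp
qed

lemma col_less [simp]: "col x < a" and row_less [simp]: "row x < c"
  unfolding col_def row_def using a_pos c_pos
  by (simp_all add: div_less_iff_less_mult mult.commute)

lemma sq_block_col_row [simp]: "sq (block x) (col x) (row x) = x"
proof -
  have "x mod (a * c) = x mod (a * c) div c * c + x mod c"
    by (metis div_mult_mod_eq mod_mod_cancel dvd_triv_right)
  then show ?thesis unfolding sq_def block_def col_def row_def by (metis add.assoc div_mult_mod_eq)
qed

lemma sq_less: "k < m \<Longrightarrow> s < a \<Longrightarrow> t < c \<Longrightarrow> sq k s t < m * (a * c)"
proof -
  assume "k < m" "s < a" "t < c"
  then have "sq k s t < (k + 1) * (a * c)" unfolding sq_def using col_row_less by simp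
  also have "\<dots> \<le> m * (a * c)" using \<open>k < m\<close> by (intro mult_right_mono) auto
  finally show ?thesis .
qed

lemma block_less: "x < m * (a * c) \<Longrightarrow> block x < m"
  unfolding block_def by (simp add: div_less_iff_less_mult a_pos c_pos)

lemma sq_eq_iff [simp]: "s < a \<Longrightarrow> t < c \<Longrightarrow> s' < a \<Longrightarrow> t' < c \<Longrightarrow>
    sq k s t = sq k' s' t' \<longleftrightarrow> k = k' \<and> s = s' \<and> t = t'"
  by (metis block_sq col_sq row_sq)

lemma sq_cases:
  assumes "x < m * (a * c)"
  obtains k s t where "x = sq k s t" "k < m" "s < a" "t < c"
  using assms block_less sq_block_col_row col_less row_less by metis

lemma permutes_blockwise:
  assumes "\<tau> permutes {..<m}"
  shows "(\<lambda>x. if x < m * (a * c) then sq (\<tau> (block x)) (col x) (row x) else x)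
      permutes {..<m * (a * c)}"
proof (rule permutes_lessThanI)
  show "inj_on (\<lambda>x. if x < m * (a * c) then sq (\<tau> (block x)) (col x) (row x) else x)
      {..<m * (a * c)}"
  proof (rule inj_onI)
    fix x y assume "x \<in> {..<m * (a * c)}" "y \<in> {..<m * (a * c)}"
      and "(if x < m * (a * c) then sq (\<tau> (block x)) (col x) (row x) else x)
         = (if y < m * (a * c) then sq (\<tau> (block y)) (col y) (row y) else y)"
    then have "block x = block y" "col x = col y" "row x = row y"
      using inj_eq[OF permutes_inj[OF assms]] by auto
    then show "x = y" by (metis sq_block_col_row)
  qed
qed (auto simp: block_less sq_less permutes_lessThan_less[OF assms])

text \<open>Every square k of (H, V) becomes an a-by-c block of squares. The top of block k is glued
  to the bottom of block V k shifted to the left by b, so that the blocks are fundamental domains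
  of the lattice spanned by (a, 0) and (b, c).\<close>

definition blowup_h :: "nat \<Rightarrow> (nat \<Rightarrow> nat) \<Rightarrow> nat \<Rightarrow> nat" where
  "blowup_h m H x =
    (if x < m * (a * c) then
      if Suc (col x) < a then sq (block x) (Suc (col x)) (row x) else sq (H (block x)) 0 (row x)
     else x)"

definition blowup_v :: "nat \<Rightarrow> (nat \<Rightarrow> nat) \<Rightarrow> (nat \<Rightarrow> nat) \<Rightarrow> nat \<Rightarrow> nat" where
  "blowup_v m H V x =
    (if x < m * (a * c) then
      if Suc (row x) < c then sq (block x) (col x) (Suc (row x))
      else if b \<le> col x then sq (V (block x)) (col x - b) 0
      else sq (V (inv H (block x))) (col x + a - b) 0
     else x)"

lemma blowup_h_sq: "k < m \<Longrightarrow> s < a \<Longrightarrow> t < c \<Longrightarrow>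
    blowup_h m H (sq k s t) = (if Suc s < a then sq k (Suc s) t else sq (H k) 0 t)"
  unfolding blowup_h_def using sq_less by simp

lemma blowup_v_sq: "k < m \<Longrightarrow> s < a \<Longrightarrow> t < c \<Longrightarrow>
    blowup_v m H V (sq k s t) =
      (if Suc t < c then sq k s (Suc t)
       else if b \<le> s then sq (V k) (s - b) 0 else sq (V (inv H k)) (s + a - b) 0)"
  unfolding blowup_v_def using sq_less by simp

end

locale blowup = hnf_triple +
  fixes m :: nat and H V :: "nat \<Rightarrow> nat"
  assumes H_permutes: "H permutes {..<m}" and V_permutes: "V permutes {..<m}"
begin

abbreviation "N \<equiv> m * (a * c)"
abbreviation "hh \<equiv> blowup_h m H"
abbreviation "vv \<equiv> blowup_v m H V"

sublocale base: square_tiling m H V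
  using H_permutes V_permutes by unfold_locales

lemma hh_less: "x < N \<Longrightarrow> hh x < N"
  by (elim sq_cases) (auto simp: blowup_h_sq sq_less base.h_less a_pos c_pos)

lemma vv_less: "x < N \<Longrightarrow> vv x < N"
  using b_less
    by (elim sq_cases) (auto simp: blowup_v_sq sq_less base.v_less base.inv_h_less a_pos c_pos)

lemma blowup_h_permutes: "hh permutes {..<N}"
proof (rule permutes_lessThanI)
  show "inj_on hh {..<N}"
  proof (rule inj_onI)
    fix x y assume "x \<in> {..<N}" "y \<in> {..<N}" "hh x = hh y"
    then obtain k s t k' s' t' where xy: "x = sq k s t" "k < m" "s < a" "t < c"
      "y = sq k' s' t'" "k' < m" "s' < a" "t' < c"
      by (metis lessThan_iff sq_cases)
    show "x = y" using \<open>hh x = hh y\<close> unfolding xy using xy(2-4,6-8) a_pos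
      by (auto simp: blowup_h_sq inj_eq[OF permutes_inj[OF H_permutes]] split: if_splits)
  qed
  show "\<And>x. \<not> x < N \<Longrightarrow> hh x = x" by (simp add: blowup_h_def)
qed (rule hh_less)

lemma blowup_v_permutes: "vv permutes {..<N}"
proof (rule permutes_lessThanI)
  show "inj_on vv {..<N}"
  proof (rule inj_onI)
    fix x y assume "x \<in> {..<N}" "y \<in> {..<N}" "vv x = vv y"
    then obtain k s t k' s' t' where xy: "x = sq k s t" "k < m" "s < a" "t < c"
      "y = sq k' s' t'" "k' < m" "s' < a" "t' < c"
      by (metis lessThan_iff sq_cases)
    have "V (inv H k) = V (inv H k') \<Longrightarrow> k = k'" by (metis base.h_inv_h base.inv_v_v)
    then show "x = y" using \<open>vv x = vv y\<close> unfolding xy using xy(2-4,6-8) a_pos b_less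
      by (auto simp: blowup_v_sq inj_eq[OF permutes_inj[OF V_permutes]] split: if_splits)
  qed
  show "\<And>x. \<not> x < N \<Longrightarrow> vv x = x" by (simp add: blowup_v_def)
qed (rule vv_less)

sublocale big: square_tiling N hh vv
  using blowup_h_permutes blowup_v_permutes by unfold_locales

lemma hh_funpow_sq: "k < m \<Longrightarrow> s + i < a \<Longrightarrow> t < c \<Longrightarrow> (hh ^^ i) (sq k s t) = sq k (s + i) t"
  by (induction i) (auto simp: blowup_h_sq)

lemma vv_funpow_sq: "k < m \<Longrightarrow> s < a \<Longrightarrow> t + i < c \<Longrightarrow> (vv ^^ i) (sq k s t) = sq k s (t + i)"
  by (induction i) (auto simp: blowup_v_sq)

lemma corner_less: "k < m \<Longrightarrow> sq k 0 0 < N"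
  using sq_less a_pos c_pos by blast

lemma hh_funpow_a: "k < m \<Longrightarrow> (hh ^^ a) (sq k 0 0) = sq (H k) 0 0"
proof -
  assume "k < m"
  then have "(hh ^^ (a - 1)) (sq k 0 0) = sq k (a - 1) 0"
    using hh_funpow_sq[of k 0 "a - 1" 0] a_pos c_pos by simp
  moreover have "a = Suc (a - 1)" using a_pos by simp
  ultimately have "(hh ^^ a) (sq k 0 0) = hh (sq k (a - 1) 0)" by (metis funpow.simps(2) o_apply)
  then show ?thesis using \<open>k < m\<close> a_pos c_pos by (simp add: blowup_h_sq)
qed

lemma block_v_corner: "k < m \<Longrightarrow> block_v b c hh vv (sq k 0 0) = sq (V k) 0 0"
  using vv_funpow_sq[of k 0 0 "c - 1"] hh_funpow_sq[of k 0 b "c - 1"]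
      blowup_v_sq[of k m b "c - 1" H V]
    a_pos b_less c_pos
  by (simp add: block_v_def)

lemma walk_in_block:
  assumes "k < m" "s < a" "t < c"
  shows "walk N hh vv (sq k 0 0) (sq k s t) (int s) (int t)"
proof -
  have "walk N hh vv (sq k 0 0) ((vv ^^ t) (sq k 0 0)) 0 (0 + int t)"
    by (rule big.walk_v_funpow[OF walk.refl[OF corner_less[OF assms(1)]]])
  then have "walk N hh vv (sq k 0 0) (sq k 0 t) 0 (int t)"
    using vv_funpow_sq[of k 0 0 t] assms a_pos by simp
  from big.walk_h_funpow[OF this, of s] show ?thesis using hh_funpow_sq[of k 0 s t] assms by simp
qed

lemma walk_block_h: "k < m \<Longrightarrow> walk N hh vv (sq k 0 0) (sq (H k) 0 0) (int a) 0"
  using big.walk_h_funpow[OF walk.refl[OF corner_less], of k a] hh_funpow_a by simp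

lemma walk_block_v: "k < m \<Longrightarrow> walk N hh vv (sq k 0 0) (sq (V k) 0 0) (int b) (int c)"
  using big.walk_block_v[OF c_pos corner_less, of k b] block_v_corner by simp

lemma walk_lift:
  "walk m H V k k' \<alpha> \<beta> \<Longrightarrow> walk N hh vv (sq k 0 0) (sq k' 0 0) (int a * \<alpha> + int b * \<beta>) (int c * \<beta>)"
proof (induction rule: walk.induct)
  case (refl k)
  then show ?case using walk.refl corner_less by simp
next
  case (right k j \<alpha> \<beta>)
  then show ?case
    using big.walk_append[OF right.IH walk_block_h] base.walk_less by (simp add: algebra_simps)
next
  case (up k j \<alpha> \<beta>)
  then show ?case
    using big.walk_append[OF up.IH walk_block_v] base.walk_less by (simp add: algebra_simps)
next
  case (left k j \<alpha> \<beta> l)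
  then have "walk N hh vv (sq j 0 0) (sq l 0 0) (- int a) 0"
    using big.walk_rev[OF walk_block_h[OF left.hyps(3)]] by simp
  then show ?case using big.walk_append[OF left.IH] by (fastforce simp: algebra_simps)
next
  case (down k j \<alpha> \<beta> l)
  then have "walk N hh vv (sq j 0 0) (sq l 0 0) (- int b) (- int c)"
    using big.walk_rev[OF walk_block_v[OF down.hyps(3)]] by simp
  then show ?case using big.walk_append[OF down.IH] by (fastforce simp: algebra_simps)
qed

definition projects :: "nat \<Rightarrow> nat \<Rightarrow> int \<Rightarrow> int \<Rightarrow> bool" where
  "projects x y \<alpha> \<beta> \<longleftrightarrow> (\<exists>\<alpha>' \<beta>'. walk m H V (block x) (block y) \<alpha>' \<beta>' \<and>
     \<alpha> + int (col x) - int (col y) = int a * \<alpha>' + int b * \<beta>' \<and>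
       \<beta> + int (row x) - int (row y) = int c * \<beta>')"

lemma projects_append:
  assumes "projects x y \<alpha> \<beta>" and "projects y z \<gamma> \<delta>"
  shows "projects x z (\<alpha> + \<gamma>) (\<beta> + \<delta>)"
proof -
  obtain \<alpha>1 \<beta>1 \<alpha>2 \<beta>2 where w: "walk m H V (block x) (block y) \<alpha>1 \<beta>1"
      "walk m H V (block y) (block z) \<alpha>2 \<beta>2"
    and e: "\<alpha> + int (col x) - int (col y) = int a * \<alpha>1 + int b * \<beta>1"
        "\<beta> + int (row x) - int (row y) = int c * \<beta>1"
      "\<gamma> + int (col y) - int (col z) = int a * \<alpha>2 + int b * \<beta>2"
      "\<delta> + int (row y) - int (row z) = int c * \<beta>2"
    using assms unfolding projects_def by blast
  have "\<alpha> + \<gamma> + int (col x) - int (col z) = int a * (\<alpha>1 + \<alpha>2) + int b * (\<beta>1 + \<beta>2)"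
    "\<beta> + \<delta> + int (row x) - int (row z) = int c * (\<beta>1 + \<beta>2)"
    using e unfolding ring_distribs by linarith+
  then show ?thesis unfolding projects_def using base.walk_append[OF w] by blast
qed

lemma projects_rev:
  assumes "projects x y \<alpha> \<beta>"
  shows "projects y x (- \<alpha>) (- \<beta>)"
proof -
  obtain \<alpha>' \<beta>' where w: "walk m H V (block x) (block y) \<alpha>' \<beta>'"
    and e: "\<alpha> + int (col x) - int (col y) = int a * \<alpha>' + int b * \<beta>'"
        "\<beta> + int (row x) - int (row y) = int c * \<beta>'"
    using assms unfolding projects_def by blast
  have "- \<alpha> + int (col y) - int (col x) = int a * (- \<alpha>') + int b * (- \<beta>')"
    "- \<beta> + int (row y) - int (row x) = int c * (- \<beta>')"
    using e by simp_all
  then show ?thesis unfolding projects_def using base.walk_rev[OF w] by blast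
qed

lemma projects_hh: "x < N \<Longrightarrow> projects x (hh x) 1 0"
proof (elim sq_cases)
  fix k s t assume x: "x = sq k s t" "k < m" "s < a" "t < c"
  show "projects x (hh x) 1 0"
  proof (cases "Suc s < a")
    case True
    then have "hh x = sq k (Suc s) t" using x by (simp add: blowup_h_sq)
    then show ?thesis unfolding projects_def using x True walk.refl[of k m H V]
      by (intro exI[of _ 0]) simp
  next
    case False
    then have "hh x = sq (H k) 0 t" "int a = int s + 1" using x by (simp_all add: blowup_h_sq)
    moreover have "walk m H V k (H k) 1 0" using walk.right[OF walk.refl[of k m H V]] x by simp
    ultimately show ?thesis unfolding projects_def using x a_pos
      by (intro exI[of _ 1] exI[of _ 0]) simp
  qed
qed

lemma projects_vv: "x < N \<Longrightarrow> projects x (vv x) 0 1"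
proof (elim sq_cases)
  fix k s t assume x: "x = sq k s t" "k < m" "s < a" "t < c"
  show "projects x (vv x) 0 1"
  proof (cases "Suc t < c")
    case True
    then have "vv x = sq k s (Suc t)" using x by (simp add: blowup_v_sq)
    then show ?thesis unfolding projects_def using x True walk.refl[of k m H V]
      by (intro exI[of _ 0]) simp
  next
    case last_row: False
    then have c: "int c = int t + 1" using x by simp
    show ?thesis
    proof (cases "b \<le> s")
      case True
      then have "vv x = sq (V k) (s - b) 0" using x last_row by (simp add: blowup_v_sq)
      moreover have "walk m H V k (V k) 0 1" using walk.up[OF walk.refl[of k m H V]] x by simp
      ultimately show ?thesis unfolding projects_def using x True c c_pos
        by (intro exI[of _ 0] exI[of _ 1]) (simp add: of_nat_diff)
    next
      case False
      then have "vv x = sq (V (inv H k)) (s + a - b) 0" "s + a - b < a"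
        using x last_row by (simp_all add: blowup_v_sq)
      moreover have "walk m H V k (V (inv H k)) (- 1) 1"
        using walk.up[OF base.walk_inv_h[OF walk.refl[of k m H V]]] x by simp
      ultimately show ?thesis unfolding projects_def using x False c c_pos b_less
        by (intro exI[of _ "- 1"] exI[of _ 1]) (simp add: of_nat_diff)
    qed
  qed
qed

lemma walk_projects: "walk N hh vv x y \<alpha> \<beta> \<Longrightarrow> projects x y \<alpha> \<beta>"
proof (induction rule: walk.induct)
  case (refl x)
  then show ?case using walk.refl[OF block_less] unfolding projects_def by fastforce
next
  case (right x y \<alpha> \<beta>)
  then show ?case using projects_append[OF right.IH projects_hh] big.walk_less by simp
next
  case (up x y \<alpha> \<beta>)
  then show ?case using projects_append[OF up.IH projects_vv] big.walk_less by simp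
next
  case (left x y \<alpha> \<beta> z)
  then have "projects y z (- 1) 0" using projects_rev[OF projects_hh[OF left.hyps(3)]] by simp
  then show ?case using projects_append[OF left.IH] by fastforce
next
  case (down x y \<alpha> \<beta> z)
  then have "projects y z 0 (- 1)" using projects_rev[OF projects_vv[OF down.hyps(3)]] by simp
  then show ?case using projects_append[OF down.IH] by fastforce
qed

text \<open>The square of the blowup whose upper right corner corresponds to the upper right corner
  of square k.\<close>

definition cone_sq :: "nat \<Rightarrow> nat" where
  "cone_sq k = (if b = 0 then sq k (a - 1) (c - 1) else sq (H k) (b - 1) (c - 1))"

lemma cone_sq_commutator:
  assumes "k < m"
  shows "vv (hh (cone_sq k)) = sq (V (H k)) 0 0" and "hh (vv (cone_sq k)) = sq (H (V k)) 0 0"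
proof -
  have bounds: "a - 1 < a" "c - 1 < c" "\<not> Suc (c - 1) < c" "\<not> Suc (a - 1) < a" "H k < m" "V k < m"
    using a_pos c_pos assms base.h_less base.v_less by auto
  have "vv (hh (cone_sq k)) = sq (V (H k)) 0 0 \<and> hh (vv (cone_sq k)) = sq (H (V k)) 0 0"
  proof (cases "b = 0")
    case True
    then have "cone_sq k = sq k (a - 1) (c - 1)" unfolding cone_sq_def by simp
    with True bounds assms a_pos c_pos blowup_h_sq blowup_v_sq show ?thesis by simp
  next
    case False
    then have "b - 1 < a" "Suc (b - 1) = b" "\<not> b \<le> b - 1" "b - 1 + a - b = a - 1"
      using b_less by auto
    with bounds assms a_pos c_pos b_less show ?thesis
      by (simp add: cone_sq_def False blowup_h_sq blowup_v_sq)
  qed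
  then show "vv (hh (cone_sq k)) = sq (V (H k)) 0 0" "hh (vv (cone_sq k)) = sq (H (V k)) 0 0"
    by auto
qed

lemma commute_off_cone_pos:
  assumes "x < N" and off: "(col x, row x) \<noteq> cone_pos"
  shows "vv (hh x) = hh (vv x)"
  using assms(1)
proof (elim sq_cases)
  fix k s t assume x: "x = sq k s t" "k < m" "s < a" "t < c"
  have off': "(s, t) \<noteq> cone_pos" using off x by simp
  show "vv (hh x) = hh (vv x)"
  proof (cases "Suc t < c")
    case True
    then show ?thesis using x by (auto simp: blowup_h_sq blowup_v_sq base.h_less a_pos)
  next
    case last_row: False
    then have t: "t = c - 1" using x by simp
    show ?thesis
    proof (cases "Suc s < a")
      case False
      then have "s = a - 1" using x by simp
      then have "b \<noteq> 0" using off' t by (auto simp: cone_pos_eq split: if_splits)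
      then have "Suc (a - 1 - b) < a" "Suc (a - 1 - b) = a - b" "\<not> b \<le> 0" "0 + a - b = a - b"
        "b \<le> a - 1" "a - 1 - b < a"
        using b_less by auto
      then show ?thesis using x last_row \<open>s = a - 1\<close> b_less a_pos
        by (simp add: blowup_h_sq blowup_v_sq base.h_less base.v_less)
    next
      case True
      have "Suc s \<noteq> b" using off' t by (auto simp: cone_pos_eq split: if_splits)
      then have "b \<le> s \<or> Suc s < b" by auto
      moreover have "Suc s - b = Suc (s - b)" "s - b < a" if "b \<le> s" using that x by auto
      moreover have "Suc s + a - b = Suc (s + a - b)" "Suc (s + a - b) < a" if "Suc s < b"
        using that b_less by auto
      ultimately show ?thesis using x last_row True
        by (auto simp: blowup_h_sq blowup_v_sq base.v_less base.inv_h_less)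
    qed
  qed
qed

lemma inj_on_cone_sq: "inj_on cone_sq {..<m}"
  using a_pos b_less c_pos
  by (auto intro!: inj_onI simp: cone_sq_def inj_eq[OF permutes_inj[OF H_permutes]]
    split: if_splits)

lemma cone_sq_less: "k < m \<Longrightarrow> cone_sq k < N"
  using a_pos b_less c_pos by (auto simp: cone_sq_def sq_less base.h_less)

lemma blowup_moved_eq:
  "{x. x < N \<and> vv (hh x) \<noteq> hh (vv x)} = cone_sq ` {k. k < m \<and> V (H k) \<noteq> H (V k)}"
proof (intro set_eqI iffI)
  fix x assume "x \<in> {x. x < N \<and> vv (hh x) \<noteq> hh (vv x)}"
  then have x: "x < N" "vv (hh x) \<noteq> hh (vv x)" by auto
  then have pos: "(col x, row x) = cone_pos" using commute_off_cone_pos by blast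
  define k where "k = (if b = 0 then block x else inv H (block x))"
  have "k < m" using block_less[OF \<open>x < N\<close>] base.inv_h_less by (simp add: k_def)
  moreover have "x = cone_sq k"
    using pos sq_block_col_row[of x] by (auto simp: cone_pos_eq cone_sq_def k_def split: if_splits)
  ultimately show "x \<in> cone_sq ` {k. k < m \<and> V (H k) \<noteq> H (V k)}"
    using x(2) cone_sq_commutator by auto
next
  fix x assume "x \<in> cone_sq ` {k. k < m \<and> V (H k) \<noteq> H (V k)}"
  then show "x \<in> {x. x < N \<and> vv (hh x) \<noteq> hh (vv x)}"
    using cone_sq_commutator cone_sq_less base.h_less base.v_less a_pos c_pos by auto
qed

lemma card_blowup_moved:
  "card {x. x < N \<and> vv (hh x) \<noteq> hh (vv x)} = card {k. k < m \<and> V (H k) \<noteq> H (V k)}"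
  unfolding blowup_moved_eq by (rule card_image) (auto intro: inj_on_subset[OF inj_on_cone_sq])

lemma blowup_connected_iff:
  "(\<forall>x<N. \<forall>y<N. \<exists>\<alpha> \<beta>. walk N hh vv x y \<alpha> \<beta>) \<longleftrightarrow> (\<forall>k<m. \<forall>l<m. \<exists>\<alpha> \<beta>. walk m H V k l \<alpha> \<beta>)"
proof (intro iffI allI impI)
  fix k l assume "\<forall>x<N. \<forall>y<N. \<exists>\<alpha> \<beta>. walk N hh vv x y \<alpha> \<beta>" "k < m" "l < m"
  then obtain \<alpha> \<beta> where "walk N hh vv (sq k 0 0) (sq l 0 0) \<alpha> \<beta>" using corner_less by blast
  from walk_projects[OF this] show "\<exists>\<alpha> \<beta>. walk m H V k l \<alpha> \<beta>"
    unfolding projects_def using a_pos c_pos by auto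
next
  fix x y assume conn: "\<forall>k<m. \<forall>l<m. \<exists>\<alpha> \<beta>. walk m H V k l \<alpha> \<beta>" "x < N" "y < N"
  then obtain k s t k' s' t' where xy: "x = sq k s t" "k < m" "s < a" "t < c"
    "y = sq k' s' t'" "k' < m" "s' < a" "t' < c" by (metis sq_cases)
  obtain \<alpha> \<beta> where "walk m H V k k' \<alpha> \<beta>" using conn xy by blast
  from walk_lift[OF this] big.walk_rev[OF walk_in_block[OF xy(2-4)]] walk_in_block[OF xy(6-8)]
  show "\<exists>\<alpha> \<beta>. walk N hh vv x y \<alpha> \<beta>" unfolding xy by (meson big.walk_append)
qed

lemma sts_H2_blowup_iff: "(hh, vv) \<in> sts_H2 N \<longleftrightarrow> (H, V) \<in> sts_H2 m"
  unfolding sts_H2_iff using blowup_connected_iff card_blowup_moved big.square_tiling_axioms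
    base.square_tiling_axioms
  by simp

lemma period_lattice_blowup: "period_lattice N hh vv = hnf_map a b c ` period_lattice m H V"
proof -
  have "{(\<alpha>, \<beta>). \<exists>x<N. walk N hh vv x x \<alpha> \<beta>} = hnf_map a b c ` {(\<alpha>, \<beta>). \<exists>k<m. walk m H V k k \<alpha> \<beta>}"
  proof (intro equalityI subsetI)
    fix p assume "p \<in> {(\<alpha>, \<beta>). \<exists>x<N. walk N hh vv x x \<alpha> \<beta>}"
    then obtain \<alpha> \<beta> x where "p = (\<alpha>, \<beta>)" "x < N" "walk N hh vv x x \<alpha> \<beta>" by auto
    with walk_projects obtain \<alpha>' \<beta>' where "walk m H V (block x) (block x) \<alpha>' \<beta>'"
      "p = hnf_map a b c (\<alpha>', \<beta>')" unfolding projects_def hnf_map_def by fastforce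
    then show "p \<in> hnf_map a b c ` {(\<alpha>, \<beta>). \<exists>k<m. walk m H V k k \<alpha> \<beta>}"
      using block_less[OF \<open>x < N\<close>] by blast
  next
    fix p assume "p \<in> hnf_map a b c ` {(\<alpha>, \<beta>). \<exists>k<m. walk m H V k k \<alpha> \<beta>}"
    then obtain \<alpha> \<beta> k where "p = hnf_map a b c (\<alpha>, \<beta>)" "k < m" "walk m H V k k \<alpha> \<beta>" by auto
    with walk_lift corner_less show "p \<in> {(\<alpha>, \<beta>). \<exists>x<N. walk N hh vv x x \<alpha> \<beta>}"
      unfolding hnf_map_def by fastforce
  qed
  then show ?thesis unfolding period_lattice_def
    using gen_subgroup_image[where f = "hnf_map a b c", OF hnf_map_diff] by simp
qed

lemma primitive_iff_blowup_lattice: "primitive m (H, V)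
  \<longleftrightarrow> period_lattice N hh vv = hnf_lattice a b c"
  unfolding primitive_def period_lattice_blowup hnf_lattice_def
  using inj_hnf_map[OF a_pos c_pos] by (auto simp: inj_image_eq_iff)

lemma box_rep_walk:
  "walk N hh vv x y \<alpha> \<beta> \<Longrightarrow> box_rep (int (col x) + \<alpha>, int (row x) + \<beta>) = (col y, row y)"
proof -
  assume "walk N hh vv x y \<alpha> \<beta>"
  from walk_projects[OF this] obtain \<alpha>' \<beta>' where
    "\<alpha> + int (col x) - int (col y) = int a * \<alpha>' + int b * \<beta>'"
    "\<beta> + int (row x) - int (row y) = int c * \<beta>'"
    unfolding projects_def by blast
  then have "(int (col x) + \<alpha> - int (col y), int (row x) + \<beta> - int (row y)) \<in> hnf_lattice a b c"
    unfolding mem_hnf_lattice_iff by (auto simp: algebra_simps)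
  then show ?thesis using box_rep_eq_iff[of _ "(int (col y), int (row y))"] box_rep_of_nat by simp
qed

end

lemma blowup_if_sts_H2: "hnf_triple a b c \<Longrightarrow> T \<in> sts_H2 m \<Longrightarrow> blowup a b c m (fst T) (snd T)"
  by (cases T) (simp add: blowup_def blowup_axioms_def sts_H2_iff square_tiling_def)

locale blowup_pair = hnf_triple a b c + A: blowup a b c m H V + B: blowup a b c m H' V'
  for a b c m H V H' V'
begin

lemma blowup_iso_via:
  assumes iso: "iso_via m \<tau> H V H' V'"
  shows "iso_via A.N (\<lambda>x. if x < A.N then sq (\<tau> (block x)) (col x) (row x) else x)
      A.hh A.vv B.hh B.vv"
proof -
  define \<sigma> where "\<sigma> = (\<lambda>x. if x < A.N then sq (\<tau> (block x)) (col x) (row x) else x)"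
  have \<tau>: "\<tau> permutes {..<m}" using iso by (simp add: iso_via_def)
  have \<tau>_less: "k < m \<Longrightarrow> \<tau> k < m" for k using \<tau> permutes_lessThan_less by blast
  have \<tau>_inv_H: "inv H' (\<tau> k) = \<tau> (inv H k)" for k
    using iso_via_h[OF iso, of "inv H k"] by (metis A.base.h_inv_h B.base.inv_h_h)
  have \<sigma>_sq: "\<sigma> (sq k s t) = sq (\<tau> k) s t" if "k < m" "s < a" "t < c" for k s t
    using that sq_less by (simp add: \<sigma>_def)
  have "\<sigma> permutes {..<A.N}" unfolding \<sigma>_def by (rule permutes_blockwise[OF \<tau>])
  moreover have "B.hh (\<sigma> x) = \<sigma> (A.hh x)" for x
  proof (cases "x < A.N")
    case True
    then obtain k s t where x: "x = sq k s t" "k < m" "s < a" "t < c" by (metis sq_cases)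
    then show ?thesis using \<tau>_less iso_via_h[OF iso] A.base.h_less a_pos
      by (simp add: blowup_h_sq \<sigma>_sq)
  next
    case False
    then show ?thesis by (simp add: blowup_h_def \<sigma>_def)
  qed
  moreover have "B.vv (\<sigma> x) = \<sigma> (A.vv x)" for x
  proof (cases "x < A.N")
    case True
    then obtain k s t where x: "x = sq k s t" "k < m" "s < a" "t < c" by (metis sq_cases)
    have "s + a - b < a" if "\<not> b \<le> s" using that b_less by linarith
    then show ?thesis using x \<tau>_less iso_via_v[OF iso] \<tau>_inv_H A.base.v_less A.base.inv_h_less
        c_pos b_less
      by (simp add: blowup_v_sq \<sigma>_sq)
  next
    case False
    then show ?thesis by (simp add: blowup_v_def \<sigma>_def)
  qed
  ultimately show ?thesis by (simp add: iso_via_def \<sigma>_def)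
qed

lemma iso_via_col_row:
  assumes H2: "(H, V) \<in> sts_H2 m" and iso: "iso_via A.N \<sigma> A.hh A.vv B.hh B.vv" and "x < A.N"
  shows "col (\<sigma> x) = col x \<and> row (\<sigma> x) = row x"
proof -
  have "(A.hh, A.vv) \<in> sts_H2 A.N" using A.sts_H2_blowup_iff H2 by simp
  then have conn: "\<forall>x<A.N. \<forall>y<A.N. \<exists>\<alpha> \<beta>. walk A.N A.hh A.vv x y \<alpha> \<beta>"
    and "card {x. x < A.N \<and> A.vv (A.hh x) \<noteq> A.hh (A.vv x)} = 3"
    by (simp_all add: sts_H2_iff)
  then have "{x. x < A.N \<and> A.vv (A.hh x) \<noteq> A.hh (A.vv x)} \<noteq> {}"
    by (metis card.empty zero_neq_numeral)
  then obtain q where q: "q < A.N" "A.vv (A.hh q) \<noteq> A.hh (A.vv q)" by blast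
  then have "B.vv (B.hh (\<sigma> q)) \<noteq> B.hh (B.vv (\<sigma> q))"
    by (simp add: iso_via_h[OF iso] iso_via_v[OF iso]
      inj_eq[OF permutes_inj[OF iso_via_permutes[OF iso]]])
  then have "(col (\<sigma> q), row (\<sigma> q)) = cone_pos"
    using B.commute_off_cone_pos[OF iso_via_less[OF iso q(1)]] by blast
  moreover have "(col q, row q) = cone_pos" using A.commute_off_cone_pos[OF q(1)] q(2) by blast
  ultimately have same_pos: "(col (\<sigma> q), row (\<sigma> q)) = (col q, row q)" by simp
  obtain \<alpha> \<beta> where w: "walk A.N A.hh A.vv q x \<alpha> \<beta>" using conn q(1) \<open>x < A.N\<close> by blast
  show ?thesis
    using A.box_rep_walk[OF w] B.box_rep_walk[OF walk_iso_via[OF iso w]] same_pos by simp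
qed

lemma iso_via_corner:
  assumes "(H, V) \<in> sts_H2 m" and iso: "iso_via A.N \<sigma> A.hh A.vv B.hh B.vv" and "k < m"
  shows "\<sigma> (sq k 0 0) = sq (block (\<sigma> (sq k 0 0))) 0 0" and "block (\<sigma> (sq k 0 0)) < m"
proof -
  have "col (\<sigma> (sq k 0 0)) = 0" "row (\<sigma> (sq k 0 0)) = 0"
    using iso_via_col_row[OF assms(1,2) A.corner_less[OF \<open>k < m\<close>]] a_pos c_pos by auto
  then show "\<sigma> (sq k 0 0) = sq (block (\<sigma> (sq k 0 0))) 0 0" by (metis sq_block_col_row)
  show "block (\<sigma> (sq k 0 0)) < m" using block_less iso_via_less[OF iso A.corner_less[OF \<open>k < m\<close>]] .
qed

lemma base_iso_via_of_blowup_iso_via: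
  assumes H2: "(H, V) \<in> sts_H2 m" and iso: "iso_via A.N \<sigma> A.hh A.vv B.hh B.vv"
  shows "iso_via m (\<lambda>k. if k < m then block (\<sigma> (sq k 0 0)) else k) H V H' V'"
proof -
  define \<tau> where "\<tau> = (\<lambda>k. if k < m then block (\<sigma> (sq k 0 0)) else k)"
  have corner: "\<sigma> (sq k 0 0) = sq (\<tau> k) 0 0" and \<tau>_less: "\<tau> k < m" if "k < m" for k
    using iso_via_corner[OF H2 iso that] that by (simp_all add: \<tau>_def)
  have "\<tau> permutes {..<m}"
  proof (rule permutes_lessThanI)
    show "inj_on \<tau> {..<m}"
    proof (rule inj_onI)
      fix k l assume "k \<in> {..<m}" "l \<in> {..<m}" "\<tau> k = \<tau> l"
      then have "\<sigma> (sq k 0 0) = \<sigma> (sq l 0 0)" using corner by simp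
      then show "k = l" using inj_eq[OF permutes_inj[OF iso_via_permutes[OF iso]]] a_pos c_pos
        by simp
    qed
  qed (use \<tau>_less in \<open>auto simp: \<tau>_def\<close>)
  moreover have "H' (\<tau> k) = \<tau> (H k)" for k
  proof (cases "k < m")
    case True
    have "sq (\<tau> (H k)) 0 0 = \<sigma> ((A.hh ^^ a) (sq k 0 0))"
      using corner A.hh_funpow_a A.base.h_less True by simp
    also have "\<dots> = sq (H' (\<tau> k)) 0 0"
      using iso_via_funpow(1)[OF iso] corner B.hh_funpow_a \<tau>_less True by simp
    finally show ?thesis using a_pos c_pos by simp
  qed (simp add: \<tau>_def A.base.h_eq_self B.base.h_eq_self)
  moreover have "V' (\<tau> k) = \<tau> (V k)" for k
  proof (cases "k < m")
    case True
    have "sq (\<tau> (V k)) 0 0 = \<sigma> (block_v b c A.hh A.vv (sq k 0 0))"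
      using corner A.block_v_corner A.base.v_less True by simp
    also have "\<dots> = sq (V' (\<tau> k)) 0 0"
      using iso_via_block_v[OF iso] corner B.block_v_corner \<tau>_less True by simp
    finally show ?thesis using a_pos c_pos by simp
  qed (simp add: \<tau>_def A.base.v_eq_self B.base.v_eq_self)
  ultimately show ?thesis unfolding \<tau>_def[symmetric] by (simp add: iso_via_def)
qed

lemma H2_iso_blowup_iff:
  assumes "(H, V) \<in> sts_H2 m"
  shows "((A.hh, A.vv), (B.hh, B.vv)) \<in> H2_iso A.N \<longleftrightarrow> ((H, V), (H', V')) \<in> H2_iso m"
  using assms A.sts_H2_blowup_iff blowup_iso_via base_iso_via_of_blowup_iso_via
  by (auto simp: H2_iso_iff)

end

section \<open>Cutting a surface into blocks\<close>

locale hnf_surface = hnf_triple a b c + square_tiling n h v for a b c n h v +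
  assumes H2: "(h, v) \<in> sts_H2 n" and lattice: "period_lattice n h v = hnf_lattice a b c"
begin

lemma connected: "i < n \<Longrightarrow> j < n \<Longrightarrow> \<exists>\<alpha> \<beta>. walk n h v i j \<alpha> \<beta>"
  using H2 by (simp add: sts_H2_iff)

lemma card_moved: "card {i. i < n \<and> v (h i) \<noteq> h (v i)} = 3"
  using H2 by (simp add: sts_H2_iff)

lemma closed_walk_mem: "walk n h v i i \<alpha> \<beta> \<Longrightarrow> (\<alpha>, \<beta>) \<in> hnf_lattice a b c"
  using walk_less lattice unfolding period_lattice_def by (blast intro: gen_subgroup.gen)

definition cone_square :: nat where
  "cone_square = (SOME q. q < n \<and> v (h q) \<noteq> h (v q))"

lemma cone_square: "cone_square < n" "v (h cone_square) \<noteq> h (v cone_square)"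
proof -
  have "{i. i < n \<and> v (h i) \<noteq> h (v i)} \<noteq> {}" using card_moved by (metis card.empty zero_neq_numeral)
  then show "cone_square < n" "v (h cone_square) \<noteq> h (v cone_square)"
    unfolding cone_square_def by (metis (mono_tags, lifting) empty_Collect_eq someI)+
qed

definition hol :: "nat \<Rightarrow> int \<times> int" where
  "hol x = (SOME p. walk n h v cone_square x (fst p) (snd p))"

lemma walk_hol: "x < n \<Longrightarrow> walk n h v cone_square x (fst (hol x)) (snd (hol x))"
  using connected[OF cone_square(1)] unfolding hol_def
    by (metis (mono_tags, lifting) fst_conv snd_conv someI)

text \<open>The position of a square modulo the period lattice, normalised such that the squares
  with the cone point at their upper right corner sit at cone_pos.\<close>

definition pos :: "nat \<Rightarrow> nat \<times> nat" where
  "pos x = box_rep (fst (hol x) - 1, snd (hol x) - 1)"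

lemma pos_less: "fst (pos x) < a" "snd (pos x) < c"
  unfolding pos_def by (rule box_rep_less)+

lemma box_rep_pos: "box_rep (int (fst (pos x)), int (snd (pos x))) = pos x"
  using box_rep_of_nat[OF pos_less] by simp

lemma pos_walk:
  assumes w: "walk n h v x y \<alpha> \<beta>"
  shows "pos y = box_rep (int (fst (pos x)) + \<alpha>, int (snd (pos x)) + \<beta>)"
proof -
  have "x < n" "y < n" using walk_less[OF w] by auto
  from walk_append[OF walk_append[OF walk_hol[OF \<open>x < n\<close>] w] walk_rev[OF walk_hol[OF \<open>y < n\<close>]]]
  have "(fst (hol x) + \<alpha> + - fst (hol y), snd (hol x) + \<beta> + - snd (hol y)) \<in> hnf_lattice a b c"
    by (rule closed_walk_mem)
  from L.neg_mem[OF this]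
  have "pos y = box_rep (fst (hol x) - 1 + \<alpha>, snd (hol x) - 1 + \<beta>)"
    unfolding pos_def box_rep_eq_iff by (simp add: algebra_simps)
  also have "\<dots> = box_rep (int (fst (pos x)) + \<alpha>, int (snd (pos x)) + \<beta>)"
    unfolding pos_def using box_rep_shift[of "(fst (hol x) - 1, snd (hol x) - 1)" \<alpha> \<beta>] by simp
  finally show ?thesis .
qed

lemma pos_cone_square: "pos cone_square = cone_pos"
proof -
  have "(fst (hol cone_square), snd (hol cone_square)) \<in> hnf_lattice a b c"
    using closed_walk_mem[OF walk_hol[OF cone_square(1)]] .
  then show ?thesis unfolding pos_def cone_pos_def box_rep_eq_iff by simp
qed

lemma pos_commutator: "x < n \<Longrightarrow> pos (commutator h v x) = pos x"
  using pos_walk[OF walk_commutator] box_rep_pos by simp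

text \<open>There is a single cone point, so all squares moved by the commutator lie in one orbit
  of it, and the commutator preserves positions.\<close>

lemma moved_pos:
  assumes "x < n" "v (h x) \<noteq> h (v x)"
  shows "pos x = cone_pos"
proof -
  let ?M = "{i. i < n \<and> commutator h v i \<noteq> i}"
  have inj: "inj (commutator h v)" by (rule bij_is_inj[OF bij_commutator])
  have maps: "commutator h v y \<in> ?M \<and> commutator h v y \<noteq> y" if "y \<in> ?M" for y
  proof -
    have "y < n" "commutator h v y \<noteq> y" using that by auto
    moreover have "commutator h v (commutator h v y) \<noteq> commutator h v y"
      using \<open>commutator h v y \<noteq> y\<close> inj by (metis injD)
    ultimately show ?thesis using walk_less[OF walk_commutator] by blast
  qed
  have "x \<in> ?M" "cone_square \<in> ?M" using assms cone_square commutator_neq_iff by auto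
  moreover have "card ?M = 3" using card_moved commutator_moved_eq by simp
  ultimately have "x = cone_square \<or> x = commutator h v cone_square
      \<or> x = commutator h v (commutator h v cone_square)"
    using fixpoint_free_card_3_orbit[OF inj _ _ maps] by simp
  moreover have "commutator h v cone_square < n"
    using walk_less[OF walk_commutator[OF cone_square(1)]] by blast
  ultimately show ?thesis using pos_cone_square pos_commutator cone_square(1) by auto
qed

lemma commute_off_cone_pos: "pos z \<noteq> cone_pos \<Longrightarrow> v (h z) = h (v z)"
  using moved_pos h_eq_self v_eq_self by (cases "z < n") auto

lemma commute_row: "(\<forall>i<r. pos ((h ^^ i) y) \<noteq> cone_pos) \<Longrightarrow> v ((h ^^ r) y) = (h ^^ r) (v y)"
  by (induction r) (simp_all add: commute_off_cone_pos)

lemma commute_rect: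
  "(\<forall>i<r. \<forall>j<q. pos ((h ^^ i) ((v ^^ j) y)) \<noteq> cone_pos)
    \<Longrightarrow> (v ^^ q) ((h ^^ r) y) = (h ^^ r) ((v ^^ q) y)"
  by (induction q) (simp_all add: commute_row)

lemma pos_funpow:
  assumes "y < n"
  shows "pos ((h ^^ i) ((v ^^ j) y))
      = box_rep (int (fst (pos y)) + int i, int (snd (pos y)) + int j)"
  using pos_walk[OF walk_h_funpow[OF walk_v_funpow[OF walk.refl[OF assms]]]] by simp

definition corners :: "nat set" where
  "corners = {x. x < n \<and> pos x = (0, 0)}"

lemma corner_pos: "j \<in> corners \<Longrightarrow> t < c \<Longrightarrow> pos ((h ^^ s) ((v ^^ t) j)) = (s mod a, t)"
  using pos_funpow[of j s t] box_rep_mod by (simp add: corners_def)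

lemma commute_below_top:
  assumes "j \<in> corners" "q < c - 1"
  shows "v ((h ^^ r) ((v ^^ q) j)) = (h ^^ r) ((v ^^ Suc q) j)"
  using commute_row[of r "(v ^^ q) j"] corner_pos[OF assms(1)] assms(2) by (simp add: cone_pos_eq)

lemma commute_rect_corner:
  assumes "j \<in> corners" "q \<le> c - 1"
  shows "(v ^^ q) ((h ^^ r) j) = (h ^^ r) ((v ^^ q) j)"
  using commute_rect[of r q j] corner_pos[OF assms(1)] assms(2) by (simp add: cone_pos_eq)

lemma commute_top_row:
  assumes "j \<in> corners" and off: "\<forall>i<r. (s + i) mod a \<noteq> fst cone_pos"
  shows "v ((h ^^ r) ((h ^^ s) ((v ^^ (c - 1)) j))) = (h ^^ r) (v ((h ^^ s) ((v ^^ (c - 1)) j)))"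
proof (rule commute_row, intro allI impI)
  fix i assume "i < r"
  have "pos ((h ^^ i) ((h ^^ s) ((v ^^ (c - 1)) j))) = ((s + i) mod a, c - 1)"
    using corner_pos[OF assms(1), of "c - 1" "i + s"] c_pos by (simp add: funpow_add add.commute)
  then show "pos ((h ^^ i) ((h ^^ s) ((v ^^ (c - 1)) j))) \<noteq> cone_pos"
    using off \<open>i < r\<close> by (metis fst_conv)
qed

lemma corner_decomposition:
  assumes "x < n"
  shows "\<exists>j\<in>corners. x = (h ^^ fst (pos x)) ((v ^^ snd (pos x)) j)"
proof -
  define j where "j = (inv v ^^ snd (pos x)) ((inv h ^^ fst (pos x)) x)"
  have w: "walk n h v x j (0 - int (fst (pos x))) (0 - int (snd (pos x)))"
    unfolding j_def by (rule walk_inv_v_funpow[OF walk_inv_h_funpow[OF walk.refl[OF assms]]])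
  then have "pos j = (0, 0)" using pos_walk[OF w] box_rep_of_nat[of 0 0] a_pos c_pos by simp
  then have "j \<in> corners" using walk_less[OF w] by (simp add: corners_def)
  moreover have "(h ^^ fst (pos x)) ((v ^^ snd (pos x)) j) = x"
    unfolding j_def using fn_o_inv_fn_is_id[OF permutes_bij[OF v_permutes]]
      fn_o_inv_fn_is_id[OF permutes_bij[OF h_permutes]] by (simp add: fun_eq_iff)
  ultimately show ?thesis by metis
qed

lemma bij_betw_corners: "bij_betw (\<lambda>(j, s, t). (h ^^ s) ((v ^^ t) j))
  (corners \<times> {..<a} \<times> {..<c}) {..<n}"
proof (rule bij_betw_imageI)
  show "inj_on (\<lambda>(j, s, t). (h ^^ s) ((v ^^ t) j)) (corners \<times> {..<a} \<times> {..<c})"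
  proof (rule inj_onI)
    fix p p' assume "p \<in> corners \<times> {..<a} \<times> {..<c}" "p' \<in> corners \<times> {..<a} \<times> {..<c}"
      and "(\<lambda>(j, s, t). (h ^^ s) ((v ^^ t) j)) p = (\<lambda>(j, s, t). (h ^^ s) ((v ^^ t) j)) p'"
    then obtain j s t j' s' t' where p: "p = (j, s, t)" "p' = (j', s', t')"
      and "j \<in> corners" "s < a" "t < c" "j' \<in> corners" "s' < a" "t' < c"
      and eq: "(h ^^ s) ((v ^^ t) j) = (h ^^ s') ((v ^^ t') j')"
      by auto
    then have "s = s'" "t = t'" using corner_pos by (metis mod_less prod.inject)+
    then show "p = p'"
      using p eq inj_fn[OF permutes_inj[OF h_permutes]] inj_fn[OF permutes_inj[OF v_permutes]]
      by (auto dest: injD)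
  qed
  show "(\<lambda>(j, s, t). (h ^^ s) ((v ^^ t) j)) ` (corners \<times> {..<a} \<times> {..<c}) = {..<n}"
  proof
    show "(\<lambda>(j, s, t). (h ^^ s) ((v ^^ t) j)) ` (corners \<times> {..<a} \<times> {..<c}) \<subseteq> {..<n}"
      using h_funpow_less v_funpow_less by (auto simp: corners_def)
    show "{..<n} \<subseteq> (\<lambda>(j, s, t). (h ^^ s) ((v ^^ t) j)) ` (corners \<times> {..<a} \<times> {..<c})"
      using corner_decomposition pos_less by (fastforce simp: image_iff)
  qed
qed

lemma card_corners: "n = card corners * (a * c)"
  using bij_betw_same_card[OF bij_betw_corners] by (simp add: card_cartesian_product)

lemma h_funpow_a_mem_corners: "j \<in> corners \<Longrightarrow> (h ^^ a) j \<in> corners"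
  using corner_pos[of j 0 a] c_pos h_funpow_less by (simp add: corners_def)

lemma block_v_mem_corners:
  assumes "j \<in> corners"
  shows "block_v b c h v j \<in> corners"
proof -
  have w: "walk n h v j (block_v b c h v j) (int b) (int c)"
    using walk_block_v[OF c_pos] assms by (simp add: corners_def)
  then have "pos (block_v b c h v j) = box_rep (int b, int c)"
    using pos_walk[OF w] assms by (simp add: corners_def)
  then show ?thesis using box_rep_mem[OF hnf_lattice_basis(2)] walk_less[OF w]
    by (simp add: corners_def)
qed


definition corner_enum :: "nat \<Rightarrow> nat" where
  "corner_enum = (SOME e. bij_betw e {..<card corners} corners)"

lemma bij_betw_corner_enum: "bij_betw corner_enum {..<card corners} corners"
proof -
  have "finite corners" by (simp add: corners_def)
  then have "\<exists>e. bij_betw e {..<card corners} corners"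
    using ex_bij_betw_nat_finite atLeast0LessThan by metis
  then show ?thesis unfolding corner_enum_def by (rule someI_ex)
qed

lemma corner_enum_mem: "k < card corners \<Longrightarrow> corner_enum k \<in> corners"
  using bij_betw_corner_enum by (auto dest: bij_betwE)

definition base_h :: "nat \<Rightarrow> nat" where
  "base_h = pullback (card corners) corner_enum (h ^^ a)"

definition base_v :: "nat \<Rightarrow> nat" where
  "base_v = pullback (card corners) corner_enum (block_v b c h v)"

lemma inj_block_v: "inj (block_v b c h v)"
proof -
  have "block_v b c h v = v \<circ> (h ^^ b) \<circ> (v ^^ (c - 1))" by (auto simp: block_v_def)
  then show ?thesis
    using permutes_inj[OF h_permutes] permutes_inj[OF v_permutes] by (simp add: inj_compose)
qed

lemma base_h_permutes: "base_h permutes {..<card corners}"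
  and corner_enum_base_h: "k < card corners \<Longrightarrow> corner_enum (base_h k) = (h ^^ a) (corner_enum k)"
proof -
  have "(h ^^ a) ` corners \<subseteq> corners" "inj_on (h ^^ a) corners"
    using h_funpow_a_mem_corners inj_on_subset[OF inj_fn[OF permutes_inj[OF h_permutes]]] by auto
  then show "base_h permutes {..<card corners}"
    and "k < card corners \<Longrightarrow> corner_enum (base_h k) = (h ^^ a) (corner_enum k)"
    unfolding base_h_def
    using pullback_permutes[OF bij_betw_corner_enum] pullback_apply[OF bij_betw_corner_enum] by auto
qed

lemma base_v_permutes: "base_v permutes {..<card corners}"
  and corner_enum_base_v: "k < card corners \<Longrightarrow> corner_enum (base_v k)
      = block_v b c h v (corner_enum k)"
proof -
  have "block_v b c h v ` corners \<subseteq> corners" "inj_on (block_v b c h v) corners"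
    using block_v_mem_corners inj_on_subset[OF inj_block_v] by auto
  then show "base_v permutes {..<card corners}"
    and "k < card corners \<Longrightarrow> corner_enum (base_v k) = block_v b c h v (corner_enum k)"
    unfolding base_v_def
    using pullback_permutes[OF bij_betw_corner_enum] pullback_apply[OF bij_betw_corner_enum] by auto
qed

sublocale base: blowup a b c "card corners" base_h base_v
  using base_h_permutes base_v_permutes by unfold_locales


definition tiling_iso :: "nat \<Rightarrow> nat" where
  "tiling_iso x = (if x < n then (h ^^ col x) ((v ^^ row x) (corner_enum (block x))) else x)"

lemma tiling_iso_sq:
  "k < card corners \<Longrightarrow> s < a \<Longrightarrow> t < c \<Longrightarrow> tiling_iso (sq k s t) = (h ^^ s) ((v ^^ t) (corner_enum k))"
  using sq_less[of k "card corners" s t] card_corners by (simp add: tiling_iso_def)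

lemma tiling_iso_permutes: "tiling_iso permutes {..<n}"
proof (rule permutes_lessThanI)
  have corner: "x < n \<Longrightarrow> (corner_enum (block x), col x, row x) \<in> corners \<times> {..<a} \<times> {..<c}" for x
    using corner_enum_mem block_less card_corners by (metis SigmaI col_less lessThan_iff row_less)
  show "tiling_iso x < n" if "x < n" for x
    using corner[OF that] that h_funpow_less v_funpow_less by (simp add: tiling_iso_def corners_def)
  show "inj_on tiling_iso {..<n}"
  proof (rule inj_onI)
    fix x y assume "x \<in> {..<n}" "y \<in> {..<n}" "tiling_iso x = tiling_iso y"
    then have "(corner_enum (block x), col x, row x) = (corner_enum (block y), col y, row y)"
      using inj_onD[OF bij_betw_imp_inj_on[OF bij_betw_corners] _ corner corner]
      by (simp add: tiling_iso_def)
    moreover have "block x < card corners" "block y < card corners"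
      using \<open>x \<in> {..<n}\<close> \<open>y \<in> {..<n}\<close> block_less card_corners by auto
    ultimately show "x = y"
      using inj_onD[OF bij_betw_imp_inj_on[OF bij_betw_corner_enum]] sq_block_col_row
      by (metis lessThan_iff prod.inject)
  qed
qed (simp add: tiling_iso_def)

lemma tiling_iso_h: "h (tiling_iso x) = tiling_iso (base.hh x)"
proof (cases "x < n")
  case True
  then obtain k s t where x: "x = sq k s t" "k < card corners" "s < a" "t < c"
    using card_corners by (metis sq_cases)
  show ?thesis
  proof (cases "Suc s < a")
    case True
    then show ?thesis using x by (simp add: tiling_iso_sq blowup_h_sq)
  next
    case False
    then have "Suc s = a" using x by simp
    have "tiling_iso (base.hh x) = (v ^^ t) ((h ^^ a) (corner_enum k))"
      using x False a_pos base.base.h_less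
        by (simp add: tiling_iso_sq blowup_h_sq corner_enum_base_h)
    also have "\<dots> = (h ^^ a) ((v ^^ t) (corner_enum k))"
      using commute_rect_corner[OF corner_enum_mem[OF x(2)]] x by simp
    also have "\<dots> = (h ^^ Suc s) ((v ^^ t) (corner_enum k))" using \<open>Suc s = a\<close> by simp
    finally show ?thesis using x by (simp add: tiling_iso_sq)
  qed
next
  case False
  then show ?thesis using card_corners by (simp add: tiling_iso_def blowup_h_def h_eq_self)
qed

lemma h_funpow_block_v:
  assumes "j \<in> corners" and "\<forall>i<r. (b + i) mod a \<noteq> fst cone_pos"
  shows "(h ^^ r) (block_v b c h v j) = v ((h ^^ (r + b)) ((v ^^ (c - 1)) j))"
  using commute_top_row[OF assms] by (simp add: block_v_def funpow_add)

lemma h_funpow_block_v_within: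
  assumes "j \<in> corners" "b \<le> s" "s < a"
  shows "(h ^^ (s - b)) (block_v b c h v j) = v ((h ^^ s) ((v ^^ (c - 1)) j))"
proof -
  have "\<forall>i<s - b. (b + i) mod a \<noteq> fst cone_pos" using assms b_less by (auto simp: cone_pos_eq)
  then show ?thesis using h_funpow_block_v[OF assms(1)] assms(2) by simp
qed

lemma h_funpow_block_v_wrap:
  assumes "j \<in> corners" "s < b"
  shows "(h ^^ (s + a - b)) (block_v b c h v j) = v ((h ^^ s) ((v ^^ (c - 1)) ((h ^^ a) j)))"
proof -
  have "\<forall>i<s + a - b. (b + i) mod a \<noteq> fst cone_pos"
    using assms b_less by (auto simp: cone_pos_eq mod_if)
  then have "(h ^^ (s + a - b)) (block_v b c h v j) = v ((h ^^ (s + a - b + b)) ((v ^^ (c - 1)) j))"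
    by (rule h_funpow_block_v[OF assms(1)])
  also have "\<dots> = v ((h ^^ s) ((h ^^ a) ((v ^^ (c - 1)) j)))"
    using b_less by (simp add: funpow_add)
  also have "\<dots> = v ((h ^^ s) ((v ^^ (c - 1)) ((h ^^ a) j)))"
    using commute_rect_corner[OF assms(1), of "c - 1" a] by simp
  finally show ?thesis .
qed

lemma tiling_iso_v: "v (tiling_iso x) = tiling_iso (base.vv x)"
proof (cases "x < n")
  case True
  then obtain k s t where x: "x = sq k s t" "k < card corners" "s < a" "t < c"
    using card_corners by (metis sq_cases)
  have j: "corner_enum k \<in> corners" using corner_enum_mem[OF x(2)] .
  show ?thesis
  proof (cases "Suc t < c")
    case True
    then show ?thesis using x commute_below_top[OF j, of t s]
      by (simp add: tiling_iso_sq blowup_v_sq)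
  next
    case last_row: False
    then have t: "t = c - 1" using x by simp
    show ?thesis
    proof (cases "b \<le> s")
      case True
      then show ?thesis
        using x last_row t h_funpow_block_v_within[OF j True] base.base.v_less c_pos
        by (simp add: tiling_iso_sq blowup_v_sq corner_enum_base_v)
    next
      case False
      define k' where "k' = inv base_h k"
      have k': "k' < card corners" "base_h k' = k" using x(2)
        by (simp_all add: k'_def base.base.inv_h_less)
      then have "(h ^^ a) (corner_enum k') = corner_enum k" using corner_enum_base_h by metis
      then show ?thesis
        using x last_row t False b_less c_pos base.base.v_less k'
          h_funpow_block_v_wrap[OF corner_enum_mem[OF k'(1)] not_le_imp_less[OF False]]
        by (simp add: tiling_iso_sq blowup_v_sq corner_enum_base_v k'_def)
    qed
  qed
next
  case False
  then show ?thesis using card_corners by (simp add: tiling_iso_def blowup_v_def v_eq_self)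
qed

lemma iso_via_tiling_iso: "iso_via n tiling_iso base.hh base.vv h v"
  using tiling_iso_permutes tiling_iso_h tiling_iso_v by (simp add: iso_via_def)


lemma base_sts_H2: "(base_h, base_v) \<in> sts_H2 (card corners)"
  using sts_H2_iso_via[OF iso_via_inv[OF iso_via_tiling_iso] H2] card_corners
    base.sts_H2_blowup_iff
  by simp

lemma base_primitive: "primitive (card corners) (base_h, base_v)"
  using period_lattice_iso_via[OF iso_via_tiling_iso] lattice card_corners
    base.primitive_iff_blowup_lattice
  by simp

lemma blowup_base_H2_iso: "((base.hh, base.vv), (h, v)) \<in> H2_iso n"
  using iso_via_tiling_iso base_sts_H2 base.sts_H2_blowup_iff card_corners
    by (auto simp: H2_iso_iff)

end

section \<open>Counting surfaces by their period lattice\<close>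

definition E_lattice :: "nat \<Rightarrow> nat \<times> nat \<times> nat \<Rightarrow> ((nat \<Rightarrow> nat) \<times> (nat \<Rightarrow> nat)) set set" where
  "E_lattice n t = {C \<in> E n. \<forall>p\<in>C. period_lattice n (fst p) (snd p)
      = (case t of (a, b, c) \<Rightarrow> hnf_lattice a b c)}"

lemma Ep_eq_quotient: "Ep m = {T \<in> sts_H2 m. primitive m T}
  // (H2_iso m \<inter> {T \<in> sts_H2 m. primitive m T} \<times> {T \<in> sts_H2 m. primitive m T})"
  unfolding Ep_def E_eq_quotient_H2_iso
  by (rule quotient_restrict_invariant[OF equiv_H2_iso])
    (auto simp: H2_iso_iff primitive_def dest: period_lattice_iso_via)

lemma E_lattice_eq_quotient:
  "E_lattice n (a, b, c) = {S \<in> sts_H2 n. period_lattice n (fst S) (snd S) = hnf_lattice a b c}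
     // (H2_iso n \<inter> {S \<in> sts_H2 n. period_lattice n (fst S) (snd S) = hnf_lattice a b c}
           \<times> {S \<in> sts_H2 n. period_lattice n (fst S) (snd S) = hnf_lattice a b c})"
  unfolding E_lattice_def E_eq_quotient_H2_iso prod.case
  by (rule quotient_restrict_invariant[OF equiv_H2_iso])
    (auto simp: H2_iso_iff dest: period_lattice_iso_via)

lemma (in hnf_triple) card_E_lattice:
  assumes "a * c dvd n"
  shows "card (E_lattice n (a, b, c)) = card (Ep (n div (a * c)))"
proof -
  define m where "m = n div (a * c)"
  have n: "n = m * (a * c)" using assms by (simp add: m_def)
  define A where "A = {T \<in> sts_H2 m. primitive m T}"
  define B where "B = {S \<in> sts_H2 n. period_lattice n (fst S) (snd S) = hnf_lattice a b c}"
  define f where "f T = (blowup_h m (fst T), blowup_v m (fst T) (snd T))" for T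
  have blowup: "blowup a b c m (fst T) (snd T)" if "T \<in> A" for T
    using that blowup_if_sts_H2[OF hnf_triple_axioms] by (simp add: A_def)
  have f_mem: "f T \<in> B" if "T \<in> A" for T
  proof -
    interpret blowup a b c m "fst T" "snd T" using blowup[OF that] .
    show ?thesis using that sts_H2_blowup_iff primitive_iff_blowup_lattice n
      by (simp add: A_def B_def f_def)
  qed
  have f_H2_iso_iff: "(f x, f y) \<in> H2_iso n \<longleftrightarrow> (x, y) \<in> H2_iso m" if "x \<in> A" "y \<in> A" for x y
  proof -
    interpret blowup_pair a b c m "fst x" "snd x" "fst y" "snd y"
      using blowup that by (simp add: blowup_pair_def blowup_def)
    show ?thesis using H2_iso_blowup_iff that n by (simp add: A_def f_def)
  qed
  have onto: "\<exists>x\<in>A. (f x, y) \<in> H2_iso n \<inter> B \<times> B" if "y \<in> B" for y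
  proof -
    interpret hnf_surface a b c n "fst y" "snd y"
      using that sts_H2_iff[of "fst y" "snd y" n]
      by unfold_locales (auto simp: B_def square_tiling_def)
    have "card corners = m" using card_corners n a_pos c_pos by simp
    then show ?thesis
      using base_sts_H2 base_primitive blowup_base_H2_iso f_mem[of "(base_h, base_v)"] that
      by (auto simp: A_def f_def)
  qed
  show ?thesis
    unfolding Ep_eq_quotient E_lattice_eq_quotient m_def[symmetric]
        A_def[symmetric] B_def[symmetric]
  proof (rule card_quotient_eq[symmetric])
    show "equiv A (H2_iso m \<inter> A \<times> A)" "equiv B (H2_iso n \<inter> B \<times> B)"
      using equiv_restrict[OF equiv_H2_iso] by (auto simp: A_def B_def)
    show "(f x, f y) \<in> H2_iso n \<inter> B \<times> B" if "(x, y) \<in> H2_iso m \<inter> A \<times> A" for x y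
      using that f_H2_iso_iff f_mem by blast
    show "(x, y) \<in> H2_iso m \<inter> A \<times> A" if "x \<in> A" "y \<in> A" "(f x, f y) \<in> H2_iso n \<inter> B \<times> B" for x y
      using that f_H2_iso_iff by blast
  qed (use f_mem onto in blast)+
qed

lemma ex_hnf_period_lattice:
  assumes "(h, v) \<in> sts_H2 n" "0 < n"
  shows "\<exists>a b c. hnf_triple a b c \<and> period_lattice n h v = hnf_lattice a b c"
proof -
  interpret square_tiling n h v using assms(1) by (simp add: sts_H2_iff)
  interpret G: Z2_subgroup "period_lattice n h v"
    unfolding period_lattice_def by (rule Z2_subgroup_gen_subgroup)
  obtain k1 where k1: "h ^^ k1 = id" "0 < k1"
    using permutation_is_nilpotent permutation_permutes h_permutes by blast
  obtain k2 where k2: "v ^^ k2 = id" "0 < k2"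
    using permutation_is_nilpotent permutation_permutes v_permutes by blast
  have "walk n h v 0 0 (int k1) 0" "walk n h v 0 0 0 (int k2)"
    using walk_h_funpow[OF walk.refl[of 0 n h v], of k1]
      walk_v_funpow[OF walk.refl[of 0 n h v], of k2]
      k1 k2 assms(2) by simp_all
  then have "(int k1, 0) \<in> period_lattice n h v" "(0, int k2) \<in> period_lattice n h v"
    unfolding period_lattice_def using assms(2) by (auto intro: gen_subgroup.gen)
  then show ?thesis using G.ex_hnf_basis k1(2) k2(2) by (metis hnf_triple.intro)
qed

definition hnf_triples :: "nat \<Rightarrow> (nat \<times> nat \<times> nat) set" where
  "hnf_triples n = {(a, b, c). hnf_triple a b c \<and> a * c dvd n}"

lemma finite_hnf_triples: "0 < n \<Longrightarrow> finite (hnf_triples n)"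
proof (rule finite_subset)
  assume "0 < n"
  have "a \<le> n \<and> b \<le> n \<and> c \<le> n" if "(a, b, c) \<in> hnf_triples n" for a b c
  proof -
    have "0 < a" "0 < c" "b < a" "a * c \<le> n"
      using that \<open>0 < n\<close> by (auto simp: hnf_triples_def hnf_triple_def dvd_imp_le)
    moreover have "a \<le> a * c" "c \<le> a * c" using \<open>0 < a\<close> \<open>0 < c\<close> by simp_all
    ultimately show ?thesis by linarith
  qed
  then show "hnf_triples n \<subseteq> {..n} \<times> {..n} \<times> {..n}" by auto
qed simp

lemma E_lattice_disjoint:
  assumes "t \<in> hnf_triples n" "t' \<in> hnf_triples n" "t \<noteq> t'"
  shows "E_lattice n t \<inter> E_lattice n t' = {}"
proof (rule ccontr)
  obtain a b c a' b' c' where t: "t = (a, b, c)" "t' = (a', b', c')" by (cases t, cases t')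
  assume "E_lattice n t \<inter> E_lattice n t' \<noteq> {}"
  then obtain C where C: "C \<in> E_lattice n t" "C \<in> E_lattice n t'" by blast
  then have "C \<in> sts_H2 n // H2_iso n" by (simp add: E_lattice_def E_eq_quotient_H2_iso)
  then obtain S where "S \<in> sts_H2 n" "C = H2_iso n `` {S}" by (rule quotientE)
  then have "S \<in> C" using equiv_class_self[OF equiv_H2_iso] by simp
  then have "hnf_lattice a b c = hnf_lattice a' b' c'" using C unfolding E_lattice_def t
    by fastforce
  moreover have "hnf_triple a b c" "hnf_triple a' b' c'" using assms(1,2)
    by (simp_all add: hnf_triples_def t)
  ultimately have "a = a' \<and> b = b' \<and> c = c'"
    using hnf_lattice_eq_imp_eq[of a c b a' c' b'] by (simp add: hnf_triple_def)
  then show False using assms(3) t by simp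
qed

lemma E_eq_Union_E_lattice:
  assumes "0 < n"
  shows "E n = (\<Union>t\<in>hnf_triples n. E_lattice n t)"
proof
  show "E n \<subseteq> (\<Union>t\<in>hnf_triples n. E_lattice n t)"
  proof
    fix C assume "C \<in> E n"
    then obtain h v where S: "(h, v) \<in> sts_H2 n" "C = H2_iso n `` {(h, v)}"
      by (auto simp: E_eq_quotient_H2_iso elim: quotientE)
    then obtain a b c where abc: "hnf_triple a b c" "period_lattice n h v = hnf_lattice a b c"
      using ex_hnf_period_lattice assms by blast
    then interpret hnf_surface a b c n h v
      using S sts_H2_iff[of h v n] by (simp add: hnf_surface_def hnf_surface_axioms_def)
    have "a * c dvd n" by (subst card_corners) simp
    then have "(a, b, c) \<in> hnf_triples n" using abc by (simp add: hnf_triples_def)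
    moreover have "period_lattice n (fst p) (snd p) = hnf_lattice a b c" if p: "p \<in> C" for p
    proof -
      obtain \<sigma> where "iso_via n \<sigma> h v (fst p) (snd p)" using p S by (auto simp: H2_iso_iff)
      then show ?thesis using period_lattice_iso_via abc(2) by metis
    qed
    then have "C \<in> E_lattice n (a, b, c)" using \<open>C \<in> E n\<close> by (simp add: E_lattice_def)
    ultimately show "C \<in> (\<Union>t\<in>hnf_triples n. E_lattice n t)" by blast
  qed
qed (auto simp: E_lattice_def)

lemma card_E_eq_sum:
  assumes "0 < n"
  shows "card (E n) = (\<Sum>(a, b, c)\<in>hnf_triples n. card (Ep (n div (a * c))))"
proof -
  have "finite (E n)"
    unfolding E_eq_quotient_H2_iso
    by (rule finite_quotient[OF finite_sts_H2]) (auto simp: H2_iso_def)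
  then have "\<forall>t\<in>hnf_triples n. finite (E_lattice n t)"
    by (auto simp: E_lattice_def)
  then have "card (E n) = (\<Sum>t\<in>hnf_triples n. card (E_lattice n t))"
    unfolding E_eq_Union_E_lattice[OF assms]
    using card_UN_disjoint[OF finite_hnf_triples[OF assms]] E_lattice_disjoint by blast
  also have "\<dots> = (\<Sum>(a, b, c)\<in>hnf_triples n. card (Ep (n div (a * c))))"
    by (rule sum.cong) (auto simp: hnf_triples_def hnf_triple.card_E_lattice)
  finally show ?thesis .
qed

lemma card_hnf_triples_with_product:
  assumes "d dvd n" "0 < d"
  shows "card {t \<in> hnf_triples n. (\<lambda>(a, b, c). a * c) t = d} = sigma1 d"
proof -
  have "{t \<in> hnf_triples n. (\<lambda>(a, b, c). a * c) t = d}
      = (\<lambda>(a, b). (a, b, d div a)) ` (SIGMA a:{a. a dvd d}. {..<a})"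
  proof (intro equalityI subsetI)
    fix t assume "t \<in> {t \<in> hnf_triples n. (\<lambda>(a, b, c). a * c) t = d}"
    then obtain a b c where t: "t = (a, b, c)" "0 < a" "b < a" "a * c = d"
      by (auto simp: hnf_triples_def hnf_triple_def)
    then show "t \<in> (\<lambda>(a, b). (a, b, d div a)) ` (SIGMA a:{a. a dvd d}. {..<a})"
      by (intro image_eqI[of _ _ "(a, b)"]) auto
  next
    fix t assume "t \<in> (\<lambda>(a, b). (a, b, d div a)) ` (SIGMA a:{a. a dvd d}. {..<a})"
    then obtain a b where t: "t = (a, b, d div a)" "a dvd d" "b < a" by auto
    moreover have "0 < d div a" using t(2) assms(2) by (auto elim!: dvdE)
    ultimately show "t \<in> {t \<in> hnf_triples n. (\<lambda>(a, b, c). a * c) t = d}"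
      using assms(1) by (auto simp: hnf_triples_def hnf_triple_def)
  qed
  moreover have "inj_on (\<lambda>(a, b). (a, b, d div a)) (SIGMA a:{a. a dvd d}. {..<a})"
    by (rule inj_onI) auto
  moreover have "finite {a. a dvd d}" using assms(2) by simp
  ultimately show ?thesis by (simp add: card_image sigma1_def)
qed

theorem mainTheorem10:
  fixes n :: nat
  assumes "n > 0"
  shows "card (E n) = (\<Sum>d\<in>{d. d dvd n}. sigma1 d * card (Ep (n div d)))"
proof -
  let ?det = "\<lambda>(a, b, c). a * c"
  have "card (E n) = (\<Sum>t\<in>hnf_triples n. card (Ep (n div ?det t)))"
    using card_E_eq_sum[OF assms] by (simp add: case_prod_beta')
  also have "\<dots> = (\<Sum>d | d dvd n. \<Sum>t | t \<in> hnf_triples n \<and> ?det t = d. card (Ep (n div ?det t)))"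
    using finite_hnf_triples[OF assms] assms
    by (intro sum.group[symmetric]) (auto simp: hnf_triples_def)
  also have "\<dots> = (\<Sum>d | d dvd n. sigma1 d * card (Ep (n div d)))"
    using assms card_hnf_triples_with_product by (intro sum.cong) (auto intro: Nat.gr0I)
  finally show ?thesis .
qed

end
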